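(* Let $Y$ be a complex Banach space and $U:\mathcal B(\mathcal H)\to Y$ a non-null bounded linear operator with $\|U\|<\lambda$. Then for every $n\in\mathbb N$, $1\le p<\infty$ and $1\le q\le\infty$, $$\frac{R_\lambda(\mathbb D,p,U)}{n}\le AP_\lambda(B_{\ell_q^n},p,U)\le\frac{R_\lambda(\mathbb D,p,U)}{n^{\frac1p+\frac1q-1}}.$$
   Context: $\mathcal B(\mathcal H)$: bounded operators on a complex Hilbert space; $\mathbb D$ the open unit disc; $B_{\ell_q^n}$ the open unit ball of $\ell_q^n$. Bounded pluriharmonic $f:\Omega\to\mathcal B(\mathcal H)$ are written $f(z)=\sum_\alpha a_\alpha z^\alpha+\sum_{|\alpha|\ge1}b_\alpha^*\bar z^\alpha$ ($b_0=0$), $\|f\|_\Omega=\sup\|f(z)\|$. $R_\lambda(\Omega,p,U)$: supremum of $r\ge0$ with $\sup_{z\in r\Omega}\sum_\alpha(\|U(a_\alpha)\|^p+\|U(b_\alpha)\|^p)|z^\alpha|^p\le\lambda^p\|f\|_\Omega^p$ for all such $f$. $AP_\lambda(\Omega,p,U)$ ($\Omega\subset\mathbb C^n$): supremum of $\frac1n\sum r_i$ over $r\in\mathbb R^n_{\ge0}$ with $\sum_\alpha(\|U(a_\alpha)\|^p+\|U(b_\alpha)\|^p)r^{p\alpha}\le\lambda^p\|f\|_\Omega^p$ for all such $f$. *)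

theory Defs
  imports "HOL-Analysis.Analysis"
begin

text \<open>A complex Hilbert space H is encoded as a real Hilbert space (type class
  real_inner + complete_space) together with an orthogonal operator J with J o J = -id
  (multiplication by i).  Its complex inner product is recovered from the real one.\<close>

definition cstruct_hilbert :: "('h::real_inner \<Rightarrow> 'h) \<Rightarrow> bool" where
  "cstruct_hilbert J \<longleftrightarrow> linear J \<and> (\<forall>x. J (J x) = - x) \<and> (\<forall>x y. inner (J x) (J y) = inner x y)"

text \<open>A complex Banach space Y: real Banach space with complex structure JY making
  the norm complex-homogeneous.\<close>

definition cscale :: "('y::real_vector \<Rightarrow> 'y) \<Rightarrow> complex \<Rightarrow> 'y \<Rightarrow> 'y" where
  "cscale JY c y = Re c *\<^sub>R y + Im c *\<^sub>R JY y"

definition cstruct_banach :: "('y::real_normed_vector \<Rightarrow> 'y) \<Rightarrow> bool" where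
  "cstruct_banach JY \<longleftrightarrow> linear JY \<and> (\<forall>y. JY (JY y) = - y) \<and>
     (\<forall>c y. norm (cscale JY c y) = cmod c * norm y)"

text \<open>B(H): the complex-linear bounded operators, i.e. bounded real-linear ones commuting with J.\<close>

definition BH :: "('h::real_normed_vector \<Rightarrow> 'h) \<Rightarrow> ('h \<Rightarrow>\<^sub>L 'h) set" where
  "BH J = {T. \<forall>x. blinfun_apply T (J x) = J (blinfun_apply T x)}"

definition cmul :: "('h::real_normed_vector \<Rightarrow> 'h) \<Rightarrow> complex \<Rightarrow> ('h \<Rightarrow>\<^sub>L 'h) \<Rightarrow> ('h \<Rightarrow>\<^sub>L 'h)" where
  "cmul J c T = Re c *\<^sub>R T + Im c *\<^sub>R (Blinfun J o\<^sub>L T)"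

text \<open>Hilbert space adjoint (real adjoint; coincides with the complex adjoint on B(H))\<close>

definition hadj :: "('h::real_inner \<Rightarrow>\<^sub>L 'h) \<Rightarrow> ('h \<Rightarrow>\<^sub>L 'h)" where
  "hadj T = (THE S. \<forall>x y. inner (blinfun_apply T x) y = inner x (blinfun_apply S y))"

definition cbounded_linear_on ::
  "('h::real_normed_vector \<Rightarrow> 'h) \<Rightarrow> ('y::real_normed_vector \<Rightarrow> 'y) \<Rightarrow> (('h \<Rightarrow>\<^sub>L 'h) \<Rightarrow> 'y) \<Rightarrow> bool" where
  "cbounded_linear_on J JY U \<longleftrightarrow>
     (\<forall>S\<in>BH J. \<forall>T\<in>BH J. U (S + T) = U S + U T) \<and>
     (\<forall>c. \<forall>T\<in>BH J. U (cmul J c T) = cscale JY c (U T)) \<and>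
     (\<exists>K. \<forall>T\<in>BH J. norm (U T) \<le> K * norm T)"

definition opnorm :: "('h::real_normed_vector \<Rightarrow> 'h) \<Rightarrow> (('h \<Rightarrow>\<^sub>L 'h) \<Rightarrow> 'y::real_normed_vector) \<Rightarrow> real" where
  "opnorm J U = Sup {norm (U T) | T. T \<in> BH J \<and> norm T \<le> 1}"

definition zpow :: "complex ^ 'n::finite \<Rightarrow> nat ^ 'n \<Rightarrow> complex" where
  "zpow z \<alpha> = (\<Prod>i\<in>UNIV. (z $ i) ^ (\<alpha> $ i))"

definition rpow :: "real ^ 'n::finite \<Rightarrow> nat ^ 'n \<Rightarrow> real" where
  "rpow r \<alpha> = (\<Prod>i\<in>UNIV. (r $ i) ^ (\<alpha> $ i))"

definition phf :: "('h::real_inner \<Rightarrow> 'h) \<Rightarrow> (nat ^ 'n::finite \<Rightarrow> ('h \<Rightarrow>\<^sub>L 'h)) \<Rightarrow> (nat ^ 'n \<Rightarrow> ('h \<Rightarrow>\<^sub>L 'h))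
     \<Rightarrow> complex ^ 'n \<Rightarrow> ('h \<Rightarrow>\<^sub>L 'h)" where
  "phf J a b z = infsum (\<lambda>\<alpha>. cmul J (zpow z \<alpha>) (a \<alpha>)) UNIV
               + infsum (\<lambda>\<alpha>. cmul J (cnj (zpow z \<alpha>)) (hadj (b \<alpha>))) UNIV"

text \<open>(a,b) are the coefficients of a bounded pluriharmonic function on Omega:
  coefficients in B(H), b_0 = 0, both series converge (unconditionally, in operator norm)
  at every point of Omega, and the resulting function is bounded on Omega.\<close>

definition PH :: "('h::{real_inner,complete_space} \<Rightarrow> 'h) \<Rightarrow> (complex ^ 'n::finite) set
     \<Rightarrow> (nat ^ 'n \<Rightarrow> ('h \<Rightarrow>\<^sub>L 'h)) \<Rightarrow> (nat ^ 'n \<Rightarrow> ('h \<Rightarrow>\<^sub>L 'h)) \<Rightarrow> bool" where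
  "PH J \<Omega> a b \<longleftrightarrow>
     (\<forall>\<alpha>. a \<alpha> \<in> BH J \<and> b \<alpha> \<in> BH J) \<and> b 0 = 0 \<and>
     (\<forall>z\<in>\<Omega>. (\<lambda>\<alpha>. cmul J (zpow z \<alpha>) (a \<alpha>)) summable_on UNIV \<and>
             (\<lambda>\<alpha>. cmul J (cnj (zpow z \<alpha>)) (hadj (b \<alpha>))) summable_on UNIV) \<and>
     bounded (phf J a b ` \<Omega>)"

definition supnorm :: "('h::real_inner \<Rightarrow> 'h) \<Rightarrow> (complex ^ 'n::finite) set
     \<Rightarrow> (nat ^ 'n \<Rightarrow> ('h \<Rightarrow>\<^sub>L 'h)) \<Rightarrow> (nat ^ 'n \<Rightarrow> ('h \<Rightarrow>\<^sub>L 'h)) \<Rightarrow> real" where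
  "supnorm J \<Omega> a b = (SUP z\<in>\<Omega>. norm (phf J a b z))"

definition Rlam :: "('h::{real_inner,complete_space} \<Rightarrow> 'h) \<Rightarrow> (('h \<Rightarrow>\<^sub>L 'h) \<Rightarrow> 'y::real_normed_vector)
     \<Rightarrow> real \<Rightarrow> (complex ^ 'n::finite) set \<Rightarrow> real \<Rightarrow> real" where
  "Rlam J U lam \<Omega> p = Sup {r. 0 \<le> r \<and>
     (\<forall>a b. PH J \<Omega> a b \<longrightarrow>
        (SUP z \<in> (\<lambda>w. r *\<^sub>R w) ` \<Omega>.
           infsum (\<lambda>\<alpha>. ennreal ((norm (U (a \<alpha>)) powr p + norm (U (b \<alpha>)) powr p)
                                  * norm (zpow z \<alpha>) powr p)) UNIV)
        \<le> ennreal (lam powr p * supnorm J \<Omega> a b powr p))}"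

definition APlam :: "('h::{real_inner,complete_space} \<Rightarrow> 'h) \<Rightarrow> (('h \<Rightarrow>\<^sub>L 'h) \<Rightarrow> 'y::real_normed_vector)
     \<Rightarrow> real \<Rightarrow> (complex ^ 'n::finite) set \<Rightarrow> real \<Rightarrow> real" where
  "APlam J U lam \<Omega> p = Sup {(\<Sum>i\<in>UNIV. r $ i) / real CARD('n) | r :: real ^ 'n. (\<forall>i. 0 \<le> r $ i) \<and>
     (\<forall>a b. PH J \<Omega> a b \<longrightarrow>
        infsum (\<lambda>\<alpha>. ennreal ((norm (U (a \<alpha>)) powr p + norm (U (b \<alpha>)) powr p)
                                * rpow r \<alpha> powr p)) UNIV
        \<le> ennreal (lam powr p * supnorm J \<Omega> a b powr p))}"

definition disc1 :: "(complex ^ 1) set" where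
  "disc1 = {z. cmod (z $ 1) < 1}"

definition lq_norm :: "ereal \<Rightarrow> complex ^ 'n::finite \<Rightarrow> real" where
  "lq_norm q z = (if q = \<infinity> then Max (range (\<lambda>i. cmod (z $ i)))
                  else (\<Sum>i\<in>UNIV. cmod (z $ i) powr real_of_ereal q) powr (1 / real_of_ereal q))"

definition lq_ball :: "ereal \<Rightarrow> (complex ^ 'n::finite) set" where
  "lq_ball q = {z. lq_norm q z < 1}"

definition qinv :: "ereal \<Rightarrow> real" where
  "qinv q = (if q = \<infinity> then 0 else 1 / real_of_ereal q)"

end

theory Submission
  imports Defs
begin

(* Lower bound: restricting a bounded pluriharmonic f on the l_q^n ball to a coordinate axis gives
   such a function on the disc with no larger sup norm, and the majorant series of f at r = t e_i is
   the one of the restriction at t.  Hence every radius admissible for R_lambda(D) yields the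
   arithmetic radius t/n.

   Upper bound: a function g on the disc lifts to f(z) = g(n^(1/q-1) (z_1 + ... + z_n)), which is
   bounded by the sup norm of g on the l_q^n ball by Hoelder's inequality.  Expanding the powers
   multinomially, the majorant series of f at r dominates that of g at rho = n^(1/q-1) |r|_p, because a
   multinomial coefficient m satisfies m <= m^p.  The power-mean inequality
   |r|_1 <= n^(1-1/p) |r|_p then converts the average of r into rho. *)

section \<open>Riesz representation and the Hilbert adjoint\<close>

lemma Cauchy_of_norm_minimizing_sequence:
  fixes C :: "'a::real_inner set"
  assumes "convex C" and xs_in: "\<And>n. xs n \<in> C" and d_le: "\<And>x. x \<in> C \<Longrightarrow> d \<le> (norm x)\<^sup>2"
    and xs_near: "\<And>n. (norm (xs n))\<^sup>2 < d + 1 / Suc n"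
  shows "Cauchy xs"
proof (rule metric_CauchyI)
  have parallelogram: "(norm (x - y))\<^sup>2 \<le> 2 * (norm x)\<^sup>2 + 2 * (norm y)\<^sup>2 - 4 * d"
    if "x \<in> C" "y \<in> C" for x y
  proof -
    have "(1/2) *\<^sub>R (x + y) \<in> C"
      using convexD[OF assms(1) that, of "1/2" "1/2"] by (simp add: scaleR_add_right)
    then have "4 * d \<le> (norm (x + y))\<^sup>2"
      using d_le by (fastforce simp: power_divide)
    moreover have "(norm (x - y))\<^sup>2 + (norm (x + y))\<^sup>2 = 2 * (norm x)\<^sup>2 + 2 * (norm y)\<^sup>2"
      by (simp add: power2_norm_eq_inner algebra_simps inner_commute)
    ultimately show ?thesis by linarith
  qed
  fix e :: real assume "e > 0"
  obtain N :: nat where N: "4 / e\<^sup>2 < N"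
    using reals_Archimedean2 by blast
  then have N0: "0 < real N"
    using \<open>e > 0\<close> by (smt (verit) divide_pos_pos zero_less_power)
  have inv: "2 / real (Suc k) \<le> 2 / N" if "k \<ge> N" for k
    using N0 that by (intro divide_left_mono) auto
  have "dist (xs m) (xs n) < e" if "m \<ge> N" "n \<ge> N" for m n
  proof -
    have "(norm (xs m - xs n))\<^sup>2 < 2 / Suc m + 2 / Suc n"
      using parallelogram[OF xs_in xs_in, of m n] xs_near[of m] xs_near[of n] by linarith
    also have "\<dots> \<le> 4 / N"
      using inv[OF that(1)] inv[OF that(2)] by linarith
    also have "\<dots> < e\<^sup>2"
      using N N0 \<open>e > 0\<close> by (simp add: pos_divide_less_eq mult.commute)
    finally show ?thesis
      using \<open>e > 0\<close> by (simp add: dist_norm power_less_imp_less_base)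
  qed
  then show "\<exists>M. \<forall>m\<ge>M. \<forall>n\<ge>M. dist (xs m) (xs n) < e" by blast
qed

lemma closed_convex_min_norm_exists:
  fixes C :: "'a::{real_inner,complete_space} set"
  assumes "closed C" "convex C" "C \<noteq> {}"
  obtains z where "z \<in> C" "\<And>y. y \<in> C \<Longrightarrow> norm z \<le> norm y"
proof -
  define d where "d = Inf ((\<lambda>x. (norm x)\<^sup>2) ` C)"
  have bdd: "bdd_below ((\<lambda>x. (norm x)\<^sup>2) ` C)" by (intro bdd_belowI[of _ 0]) auto
  have d_le: "d \<le> (norm x)\<^sup>2" if "x \<in> C" for x
    unfolding d_def using bdd that by (intro cInf_lower) auto
  have "\<exists>x\<in>C. (norm x)\<^sup>2 < d + 1 / Suc n" for n
    using cInf_lessD[of "(\<lambda>x. (norm x)\<^sup>2) ` C" "d + 1 / Suc n"] assms(3)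
    unfolding d_def by fastforce
  then obtain xs where xs_in: "\<And>n. xs n \<in> C" and xs_near: "\<And>n. (norm (xs n))\<^sup>2 < d + 1 / Suc n"
    by metis
  have "Cauchy xs"
    using assms(2) xs_in d_le xs_near by (rule Cauchy_of_norm_minimizing_sequence)
  then obtain z where lim: "xs \<longlonglongrightarrow> z"
    using Cauchy_convergent_iff convergent_def by blast
  have "z \<in> C"
    using closed_sequentially[OF assms(1) _ lim] xs_in by blast
  moreover have "(norm z)\<^sup>2 \<le> d"
  proof (rule LIMSEQ_le)
    show "(\<lambda>n. (norm (xs n))\<^sup>2) \<longlonglongrightarrow> (norm z)\<^sup>2"
      by (intro tendsto_intros lim)
    show "(\<lambda>n. d + 1 / real (Suc n)) \<longlonglongrightarrow> d"
      using tendsto_add[OF tendsto_const LIMSEQ_inverse_real_of_nat, of d]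
      by (simp add: inverse_eq_divide)
  qed (use xs_near less_imp_le in blast)
  then have "norm z \<le> norm y" if "y \<in> C" for y
    using d_le[OF that] by (meson order.trans power2_le_imp_le norm_ge_zero)
  ultimately show thesis using that by blast
qed

lemma bounded_linear_inner_representation:
  fixes f :: "'a::{real_inner,complete_space} \<Rightarrow> real"
  assumes "bounded_linear f"
  obtains z where "\<And>x. f x = inner x z"
proof (cases "\<forall>x. f x = 0")
  case True
  then show thesis using that[of 0] by simp
next
  case False
  interpret f: bounded_linear f by fact
  obtain x1 where "f x1 \<noteq> 0" using False by blast
  then have "x1 /\<^sub>R f x1 \<in> f -` {1}" by (simp add: f.scaleR)
  then have "f -` {1} \<noteq> {}" by blast
  moreover have "closed (f -` {1})"
    by (intro closed_vimage closed_singleton f.continuous_on continuous_on_id)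
  moreover have "convex (f -` {1})"
    by (rule convex_linear_vimage) (simp_all add: f.linear)
  ultimately obtain z where "z \<in> f -` {1}" and "\<And>y. y \<in> f -` {1} \<Longrightarrow> norm z \<le> norm y"
    by (metis closed_convex_min_norm_exists)
  then have z: "f z = 1" and z_min: "\<And>y. f y = 1 \<Longrightarrow> norm z \<le> norm y" by auto
  have orth: "inner z y = 0" if "f y = 0" for y
  proof (cases "y = 0")
    case False
    define t where "t = - inner z y / inner y y"
    have "f (z + t *\<^sub>R y) = 1" using z that by (simp add: f.add f.scaleR)
    then have "(norm z)\<^sup>2 \<le> (norm (z + t *\<^sub>R y))\<^sup>2" using z_min by (simp add: power_mono)
    also have "\<dots> = (norm z)\<^sup>2 + 2 * t * inner z y + t\<^sup>2 * inner y y"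
      unfolding power2_norm_eq_inner
      by (simp add: inner_add_left inner_add_right inner_commute power2_eq_square)
    also have "\<dots> = (norm z)\<^sup>2 - (inner z y)\<^sup>2 / inner y y"
      using False by (simp add: t_def power2_eq_square diff_divide_distrib add_divide_distrib)
    finally have "(inner z y)\<^sup>2 / inner y y \<le> 0" by simp
    moreover have "0 < inner y y" using False by simp
    ultimately show ?thesis by (auto simp: divide_le_0_iff)
  qed simp
  have "f x = inner x ((1 / inner z z) *\<^sub>R z)" for x
  proof -
    have "inner z (x - f x *\<^sub>R z) = 0" using z by (intro orth) (simp add: f.diff f.scaleR)
    moreover have "z \<noteq> 0" using z by auto
    ultimately show ?thesis by (simp add: inner_diff_right inner_commute field_simps)
  qed
  then show thesis by (rule that)
qed

lemma blinfun_adjoint_exists: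
  fixes T :: "'a::{real_inner,complete_space} \<Rightarrow>\<^sub>L 'a"
  shows "\<exists>S :: 'a \<Rightarrow>\<^sub>L 'a. \<forall>x y. inner (T x) y = inner x (S y)"
proof -
  have "bounded_linear (\<lambda>x. inner (T x) y)" for y
    by (intro bounded_linear_compose[OF bounded_linear_inner_left] blinfun.bounded_linear_right)
  then have "\<exists>z. \<forall>x. inner (T x) y = inner x z" for y
    using bounded_linear_inner_representation by metis
  then obtain S where S: "\<And>x y. inner (T x) y = inner x (S y)"
    using choice[of "\<lambda>y z. \<forall>x. inner (T x) y = inner x z"] by blast
  have "linear S"
    by (rule linearI; rule vector_eq_ldot[THEN iffD1]) (simp_all flip: S add: inner_add_right)
  moreover have "norm (S y) \<le> norm y * norm T" for y
  proof -
    have "norm (S y) * norm (S y) = inner (T (S y)) y" by (simp add: S power2_eq_square flip: power2_norm_eq_inner)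
    also have "\<dots> \<le> norm (T (S y)) * norm y" by (rule norm_cauchy_schwarz)
    also have "\<dots> \<le> norm T * norm (S y) * norm y"
      by (intro mult_right_mono norm_blinfun) simp
    finally have "norm (S y) * norm (S y) \<le> (norm y * norm T) * norm (S y)"
      by (simp add: mult_ac)
    then show ?thesis by (cases "S y = 0") (simp_all add: mult_le_cancel_right)
  qed
  ultimately have "bounded_linear S"
    by (intro bounded_linear_intro[of _ "norm T"]) (auto simp: linear_add linear_scale)
  then have "\<forall>x y. inner (T x) y = inner x (Blinfun S y)"
    by (simp add: bounded_linear_Blinfun_apply S)
  then show ?thesis by blast
qed

lemma blinfun_adjoint_unique:
  fixes T S S' :: "'a::real_inner \<Rightarrow>\<^sub>L 'a"
  assumes "\<And>x y. inner (T x) y = inner x (S y)" and "\<And>x y. inner (T x) y = inner x (S' y)"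
  shows "S = S'"
proof (rule blinfun_eqI)
  fix y show "S y = S' y"
    using assms by (intro vector_eq_ldot[THEN iffD1]) simp
qed

lemma hadj_adjoint:
  fixes T :: "'a::{real_inner,complete_space} \<Rightarrow>\<^sub>L 'a"
  shows "inner (T x) y = inner x (hadj T y)"
proof -
  have "\<exists>!S :: 'a \<Rightarrow>\<^sub>L 'a. \<forall>x y. inner (T x) y = inner x (S y)"
  proof (rule ex_ex1I)
    show "\<exists>S :: 'a \<Rightarrow>\<^sub>L 'a. \<forall>x y. inner (T x) y = inner x (S y)" by (rule blinfun_adjoint_exists)
  next
    fix S S' :: "'a \<Rightarrow>\<^sub>L 'a"
    assume "\<forall>x y. inner (T x) y = inner x (S y)" "\<forall>x y. inner (T x) y = inner x (S' y)"
    then show "S = S'" by (intro blinfun_adjoint_unique) auto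
  qed
  from theI'[OF this] show ?thesis unfolding hadj_def by blast
qed

lemma hadj_eqI:
  fixes T S :: "'a::{real_inner,complete_space} \<Rightarrow>\<^sub>L 'a"
  assumes "\<And>x y. inner (T x) y = inner x (S y)"
  shows "hadj T = S"
  using blinfun_adjoint_unique[OF hadj_adjoint assms] .

lemma hadj_scaleR:
  fixes T :: "'a::{real_inner,complete_space} \<Rightarrow>\<^sub>L 'a"
  shows "hadj (c *\<^sub>R T) = c *\<^sub>R hadj T"
  by (rule hadj_eqI) (simp add: blinfun.scaleR_left hadj_adjoint[of T])

lemma hadj_zero [simp]: "hadj (0 :: 'a::{real_inner,complete_space} \<Rightarrow>\<^sub>L 'a) = 0"
  by (rule hadj_eqI) simp

lemma cstruct_hilbert_norm:
  assumes "cstruct_hilbert J" shows "norm (J x) = norm x"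
  using assms by (simp add: cstruct_hilbert_def norm_eq_sqrt_inner)

lemma cstruct_hilbert_bounded_linear:
  assumes "cstruct_hilbert J" shows "bounded_linear J"
  using assms cstruct_hilbert_norm[OF assms]
  by (intro bounded_linear_intro[of _ 1]) (auto simp: cstruct_hilbert_def linear_add linear_scale)

lemma norm_cmul_le:
  assumes "cstruct_hilbert J" shows "norm (cmul J c T) \<le> 2 * cmod c * norm T"
proof -
  have "norm (Blinfun J) \<le> 1"
    by (rule norm_blinfun_bound)
      (simp_all add: bounded_linear_Blinfun_apply cstruct_hilbert_bounded_linear[OF assms]
        cstruct_hilbert_norm[OF assms])
  have "norm (Blinfun J o\<^sub>L T) \<le> norm (Blinfun J) * norm T" by (rule norm_blinfun_compose)
  also have "\<dots> \<le> norm T" using \<open>norm (Blinfun J) \<le> 1\<close> by (simp add: mult_left_le_one_le)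
  finally have J_comp: "norm (Blinfun J o\<^sub>L T) \<le> norm T" .
  have "norm (cmul J c T) \<le> \<bar>Re c\<bar> * norm T + \<bar>Im c\<bar> * norm (Blinfun J o\<^sub>L T)"
    unfolding cmul_def by (metis norm_scaleR norm_triangle_ineq)
  also have "\<dots> \<le> cmod c * norm T + cmod c * norm T"
    using J_comp abs_Re_le_cmod[of c] abs_Im_le_cmod[of c] by (intro add_mono mult_mono) auto
  finally show ?thesis by simp
qed

lemma cmul_of_real [simp]: "cmul J (of_real r) T = r *\<^sub>R T"
  by (simp add: cmul_def)

lemma cmul_one [simp]: "cmul J 1 T = T"
  by (simp add: cmul_def)

lemma cmul_zero_left [simp]: "cmul J 0 T = 0"
  by (simp add: cmul_def)

lemma cmul_zero_right [simp]: "cmul J c 0 = 0"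
  by (simp add: cmul_def)

lemma cmul_scaleR_right: "cmul J c (r *\<^sub>R T) = cmul J (of_real r * c) T"
proof -
  have "A o\<^sub>L (r *\<^sub>R T) = r *\<^sub>R (A o\<^sub>L T)" for A :: "'a \<Rightarrow>\<^sub>L 'a"
    by (rule blinfun_eqI) (simp add: blinfun.scaleR_right blinfun.scaleR_left)
  then show ?thesis by (simp add: cmul_def mult.commute)
qed

lemma cmul_sum_left: "cmul J (sum f A) T = (\<Sum>i\<in>A. cmul J (f i) T)"
  by (induction A rule: infinite_finite_induct) (simp_all add: cmul_def scaleR_add_left)

lemma BH_zero: "cstruct_hilbert J \<Longrightarrow> 0 \<in> BH J"
  by (simp add: BH_def cstruct_hilbert_def linear_0)

lemma BH_scaleR: "cstruct_hilbert J \<Longrightarrow> T \<in> BH J \<Longrightarrow> r *\<^sub>R T \<in> BH J"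
  by (simp add: BH_def cstruct_hilbert_def linear_scale blinfun.scaleR_left)

lemma cscale_of_real [simp]: "cscale JY (of_real r) y = r *\<^sub>R y"
  by (simp add: cscale_def)

lemma cbounded_linear_on_scaleR:
  assumes "cbounded_linear_on J JY U" "T \<in> BH J"
  shows "U (r *\<^sub>R T) = r *\<^sub>R U T"
  using assms unfolding cbounded_linear_on_def by (metis cmul_of_real cscale_of_real)

lemma cbounded_linear_on_zero:
  assumes "cstruct_hilbert J" "cbounded_linear_on J JY U" shows "U 0 = 0"
  using cbounded_linear_on_scaleR[OF assms(2) BH_zero[OF assms(1)], of 0] by simp

lemma opnorm_nonneg_bound:
  assumes J: "cstruct_hilbert J" and U: "cbounded_linear_on J JY U"
  shows "0 \<le> opnorm J U" and "T \<in> BH J \<Longrightarrow> norm (U T) \<le> opnorm J U * norm T"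
proof -
  define X where "X = {norm (U T) | T. T \<in> BH J \<and> norm T \<le> 1}"
  obtain K where K: "\<And>T. T \<in> BH J \<Longrightarrow> norm (U T) \<le> K * norm T"
    using U unfolding cbounded_linear_on_def by blast
  have "bdd_above X"
  proof (rule bdd_aboveI)
    fix x assume "x \<in> X"
    then obtain T where "x = norm (U T)" "T \<in> BH J" "norm T \<le> 1" by (auto simp: X_def)
    then show "x \<le> \<bar>K\<bar>"
      using K[of T] by (smt (verit) abs_ge_self mult_left_le mult_right_mono norm_ge_zero)
  qed
  then have X_le: "x \<in> X \<Longrightarrow> x \<le> opnorm J U" for x
    by (simp add: opnorm_def X_def[symmetric] cSup_upper)
  have "0 \<in> X"
    using cbounded_linear_on_zero[OF J U] BH_zero[OF J] by (force simp: X_def)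
  then show "0 \<le> opnorm J U" by (rule X_le)
  assume T: "T \<in> BH J"
  show "norm (U T) \<le> opnorm J U * norm T"
  proof (cases "T = 0")
    case True
    then show ?thesis using cbounded_linear_on_zero[OF J U] by simp
  next
    case False
    have "norm (U ((1 / norm T) *\<^sub>R T)) \<in> X"
      using BH_scaleR[OF J T] False by (auto simp: X_def)
    then have "norm (U T) / norm T \<le> opnorm J U"
      using X_le cbounded_linear_on_scaleR[OF U T] by simp
    then show ?thesis using False by (simp add: field_simps)
  qed
qed

section \<open>Multi-indices and the multinomial theorem\<close>

definition mdeg :: "nat ^ 'n::finite \<Rightarrow> nat" where
  "mdeg \<alpha> = (\<Sum>i\<in>UNIV. \<alpha> $ i)"

definition letter_count :: "(nat \<Rightarrow> 'n::finite) \<Rightarrow> nat \<Rightarrow> nat ^ 'n" where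
  "letter_count w k = (\<chi> i. card {j. j < k \<and> w j = i})"

(* |alpha|! / alpha!, counted as the words of length |alpha| with letter multiplicities alpha *)
definition multinomial_coeff :: "nat ^ 'n::finite \<Rightarrow> nat" where
  "multinomial_coeff \<alpha> = card {w \<in> {..<mdeg \<alpha>} \<rightarrow>\<^sub>E UNIV. letter_count w (mdeg \<alpha>) = \<alpha>}"

lemma component_le_mdeg: "\<alpha> $ i \<le> mdeg \<alpha>"
  unfolding mdeg_def by (rule member_le_sum) auto

lemma finite_mdeg_le: "finite {\<alpha> :: nat ^ 'n::finite. mdeg \<alpha> \<le> K}"
proof (rule finite_subset)
  show "{\<alpha> :: nat ^ 'n. mdeg \<alpha> \<le> K} \<subseteq> vec_lambda ` (UNIV \<rightarrow>\<^sub>E {..K})"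
  proof
    fix \<alpha> :: "nat ^ 'n" assume "\<alpha> \<in> {\<alpha>. mdeg \<alpha> \<le> K}"
    then have "(\<lambda>i. \<alpha> $ i) \<in> UNIV \<rightarrow>\<^sub>E {..K}" by (auto intro: order_trans[OF component_le_mdeg])
    then show "\<alpha> \<in> vec_lambda ` (UNIV \<rightarrow>\<^sub>E {..K})" by (metis image_eqI vec_nth_inverse)
  qed
qed (intro finite_imageI finite_PiE; simp)

lemma finite_mdeg_eq: "finite {\<alpha> :: nat ^ 'n::finite. mdeg \<alpha> = k}"
  by (rule finite_subset[OF _ finite_mdeg_le[of k]]) auto

lemma mdeg_letter_count: "mdeg (letter_count w k) = k"
proof -
  have "(\<Sum>i\<in>UNIV. card {j. j < k \<and> w j = i}) = (\<Sum>i\<in>UNIV. \<Sum>j | j \<in> {..<k} \<and> w j = i. 1::nat)"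
    by simp
  also have "\<dots> = card {..<k}" by (subst sum.group) auto
  finally show ?thesis by (simp add: mdeg_def letter_count_def)
qed

lemma prod_word_eq_monomial:
  fixes x :: "'n::finite \<Rightarrow> 'a::comm_monoid_mult"
  shows "(\<Prod>j<k. x (w j)) = (\<Prod>i\<in>UNIV. x i ^ (letter_count w k $ i))"
proof -
  have "(\<Prod>j<k. x (w j)) = (\<Prod>i\<in>UNIV. \<Prod>j | j \<in> {..<k} \<and> w j = i. x (w j))"
    by (subst prod.group) auto
  also have "\<dots> = (\<Prod>i\<in>UNIV. \<Prod>j | j \<in> {..<k} \<and> w j = i. x i)"
    by (intro prod.cong refl) auto
  finally show ?thesis by (simp add: letter_count_def)
qed

theorem multinomial_theorem:
  fixes x :: "'n::finite \<Rightarrow> 'a::comm_semiring_1"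
  shows "(\<Sum>i\<in>UNIV. x i) ^ k
           = (\<Sum>\<alpha> | mdeg \<alpha> = k. of_nat (multinomial_coeff \<alpha>) * (\<Prod>i\<in>UNIV. x i ^ (\<alpha> $ i)))"
proof -
  have "(\<Sum>i\<in>UNIV. x i) ^ k = (\<Prod>j<k. \<Sum>i\<in>UNIV. x i)" by simp
  also have "\<dots> = (\<Sum>w \<in> {..<k} \<rightarrow>\<^sub>E UNIV. \<Prod>j<k. x (w j))"
    by (rule prod_sum_PiE) auto
  also have "\<dots> = (\<Sum>w \<in> {..<k} \<rightarrow>\<^sub>E UNIV. \<Prod>i\<in>UNIV. x i ^ (letter_count w k $ i))"
    by (simp add: prod_word_eq_monomial)
  also have "\<dots> = (\<Sum>\<alpha> | mdeg \<alpha> = k. \<Sum>w | w \<in> {..<k} \<rightarrow>\<^sub>E UNIV \<and> letter_count w k = \<alpha>.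
                     \<Prod>i\<in>UNIV. x i ^ (letter_count w k $ i))"
    by (rule sym, rule sum.group)
      (simp_all add: finite_mdeg_eq mdeg_letter_count finite_PiE image_subset_iff)
  also have "\<dots> = (\<Sum>\<alpha> | mdeg \<alpha> = k. of_nat (multinomial_coeff \<alpha>) * (\<Prod>i\<in>UNIV. x i ^ (\<alpha> $ i)))"
    by (intro sum.cong refl) (simp add: multinomial_coeff_def)
  finally show ?thesis .
qed

lemma multinomial_theorem_scaled:
  fixes x :: "'n::finite \<Rightarrow> 'a::{comm_ring_1,real_algebra_1}"
  shows "(of_real u * (\<Sum>i\<in>UNIV. x i)) ^ k
           = (\<Sum>\<alpha> | mdeg \<alpha> = k. of_real (real (multinomial_coeff \<alpha>) * u ^ k) * (\<Prod>i\<in>UNIV. x i ^ (\<alpha> $ i)))"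
proof -
  have "(of_real u * (\<Sum>i\<in>UNIV. x i)) ^ k = of_real u ^ k * (\<Sum>i\<in>UNIV. x i) ^ k"
    by (rule power_mult_distrib)
  also have "\<dots> = (\<Sum>\<alpha> | mdeg \<alpha> = k. of_real u ^ k * (of_nat (multinomial_coeff \<alpha>) * (\<Prod>i\<in>UNIV. x i ^ (\<alpha> $ i))))"
    by (simp add: multinomial_theorem sum_distrib_left)
  finally show ?thesis by (simp add: mult_ac)
qed

lemma sum_mdeg_le_by_degree:
  "(\<Sum>\<alpha> | mdeg \<alpha> \<le> K. h \<alpha>) = (\<Sum>k\<le>K. \<Sum>\<alpha> | mdeg \<alpha> = k. h (\<alpha> :: nat ^ 'n::finite))"
proof -
  have "(\<Sum>\<alpha> | mdeg \<alpha> \<le> K. h \<alpha>) = (\<Sum>k\<le>K. \<Sum>\<alpha> | \<alpha> \<in> {\<alpha>. mdeg \<alpha> \<le> K} \<and> mdeg \<alpha> = k. h \<alpha>)"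
    by (rule sum.group[symmetric]) (auto simp: finite_mdeg_le)
  also have "\<dots> = (\<Sum>k\<le>K. \<Sum>\<alpha> | mdeg \<alpha> = k. h \<alpha>)"
    by (auto intro!: sum.cong)
  finally show ?thesis .
qed

lemma prod_zero_power: "(\<Prod>j\<in>UNIV. (0::'a::comm_semiring_1) ^ (\<alpha> $ j)) = (if \<alpha> = 0 then 1 else 0)"
proof (cases "\<alpha> = 0")
  case False
  then obtain j where "\<alpha> $ j \<noteq> 0" by (auto simp: vec_eq_iff)
  then show ?thesis using False by (auto simp: zero_power intro!: prod_zero exI[of _ j])
qed simp

lemma zpow_zero: "zpow 0 \<alpha> = (if \<alpha> = 0 then 1 else 0)"
  unfolding zpow_def by (simp add: prod_zero_power)

lemma rpow_zero: "rpow 0 \<alpha> = (if \<alpha> = 0 then 1 else 0)"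
  unfolding rpow_def by (simp add: prod_zero_power)

lemma power_powr_commute: "0 \<le> x \<Longrightarrow> (x ^ n) powr p = (x powr p) ^ n"
  for x :: real
  by (induction n) (simp_all add: powr_mult)

lemma of_nat_le_of_nat_powr: "1 \<le> p \<Longrightarrow> real m \<le> real m powr p"
proof (cases "m = 0")
  case False
  assume "1 \<le> p"
  have "real m = real m powr 1" using False by simp
  also have "\<dots> \<le> real m powr p" using False \<open>1 \<le> p\<close> by (intro powr_mono) auto
  finally show ?thesis .
qed simp

lemma sum_le_card_powr_mult_sum_powr:
  fixes y :: "'i \<Rightarrow> real"
  assumes S: "finite S" and Q: "1 \<le> Q" and y: "\<And>i. i \<in> S \<Longrightarrow> 0 \<le> y i"
  shows "(\<Sum>i\<in>S. y i) \<le> card S powr (1 - 1/Q) * (\<Sum>i\<in>S. y i powr Q) powr (1/Q)"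
proof -
  define P where "P = {i\<in>S. 0 < y i}"
  have P_sums: "(\<Sum>i\<in>S. y i) = (\<Sum>i\<in>P. y i)" "(\<Sum>i\<in>S. y i powr Q) = (\<Sum>i\<in>P. y i powr Q)"
    unfolding P_def using S y by (auto intro!: sum.mono_neutral_right simp: less_le)
  have "card P powr (1 - 1/Q) \<le> card S powr (1 - 1/Q)"
    using S Q by (intro powr_mono2) (auto simp: P_def card_mono)
  moreover have "(\<Sum>i\<in>P. y i) \<le> card P powr (1 - 1/Q) * (\<Sum>i\<in>P. y i powr Q) powr (1/Q)"
  proof (cases "P = {}")
    case False
    define m where "m = real (card P)"
    have P: "finite P" and m: "m > 0" using S False by (auto simp: P_def m_def card_gt_0_iff)
    have "(\<Sum>i\<in>P. (1/m) *\<^sub>R y i) powr Q \<le> (\<Sum>i\<in>P. (1/m) * y i powr Q)"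
      using m by (intro convex_on_sum[OF P False powr_convex[OF Q]]) (auto simp: P_def m_def)
    then have "((\<Sum>i\<in>P. y i) / m) powr Q \<le> (\<Sum>i\<in>P. y i powr Q) / m"
      by (simp add: sum_distrib_left[symmetric] sum_divide_distrib[symmetric])
    moreover have "0 \<le> (\<Sum>i\<in>P. y i)" by (auto simp: P_def intro: sum_nonneg)
    ultimately have "(((\<Sum>i\<in>P. y i) / m) powr Q) powr (1/Q) \<le> ((\<Sum>i\<in>P. y i powr Q) / m) powr (1/Q)"
      using Q m by (intro powr_mono2) auto
    then have "(\<Sum>i\<in>P. y i) / m \<le> ((\<Sum>i\<in>P. y i powr Q) / m) powr (1/Q)"
      using \<open>0 \<le> (\<Sum>i\<in>P. y i)\<close> m Q by (simp add: powr_powr)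
    also have "\<dots> = m powr (1 - 1/Q) * (\<Sum>i\<in>P. y i powr Q) powr (1/Q) / m"
      using m by (simp add: powr_divide powr_diff field_simps)
    finally show ?thesis using m by (simp add: m_def field_simps)
  qed simp
  ultimately show ?thesis
    unfolding P_sums by (meson order_trans mult_right_mono powr_ge_zero)
qed

lemma mean_mult_card_powr_le:
  fixes r :: "real ^ 'n::finite"
  assumes p: "1 \<le> p" and r: "\<And>i. 0 \<le> r $ i"
  shows "(\<Sum>i\<in>UNIV. r $ i) / real CARD('n) * real CARD('n) powr (1/p + c - 1)
           \<le> real CARD('n) powr (c - 1) * (\<Sum>i\<in>UNIV. r $ i powr p) powr (1/p)"
proof -
  define N where "N = real CARD('n)"
  have N: "0 < N" by (simp add: N_def)
  have "(\<Sum>i\<in>UNIV. r $ i) / N * N powr (1/p + c - 1) = (\<Sum>i\<in>UNIV. r $ i) * N powr (1/p + c - 2)"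
    using N by (simp add: powr_diff power2_eq_square)
  also have "\<dots> \<le> (N powr (1 - 1/p) * (\<Sum>i\<in>UNIV. r $ i powr p) powr (1/p)) * N powr (1/p + c - 2)"
    unfolding N_def using p r by (intro mult_right_mono sum_le_card_powr_mult_sum_powr) auto
  also have "\<dots> = N powr (c - 1) * (\<Sum>i\<in>UNIV. r $ i powr p) powr (1/p)"
    by (simp add: powr_add[symmetric] mult_ac)
  finally show ?thesis by (simp add: N_def)
qed

lemma pnorm_power_le_multinomial_sum:
  fixes r :: "real ^ 'n::finite"
  assumes p: "1 \<le> p" and r: "\<And>i. 0 \<le> r $ i" and u: "0 \<le> u"
  shows "((u * (\<Sum>i\<in>UNIV. r $ i powr p) powr (1/p)) ^ k) powr p
           \<le> (\<Sum>\<alpha> | mdeg \<alpha> = k. (real (multinomial_coeff \<alpha>) * u ^ k) powr p * rpow r \<alpha> powr p)"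
proof -
  have "(u * (\<Sum>i\<in>UNIV. r $ i powr p) powr (1/p)) powr p = (\<Sum>i\<in>UNIV. u powr p * r $ i powr p)"
    using u p by (simp add: powr_mult powr_powr sum_nonneg sum_distrib_left)
  then have "((u * (\<Sum>i\<in>UNIV. r $ i powr p) powr (1/p)) ^ k) powr p
      = (\<Sum>\<alpha> | mdeg \<alpha> = k. real (multinomial_coeff \<alpha>) * (\<Prod>i\<in>UNIV. (u powr p * r $ i powr p) ^ (\<alpha> $ i)))"
    using u by (simp add: power_powr_commute multinomial_theorem)
  also have "\<dots> \<le> (\<Sum>\<alpha> | mdeg \<alpha> = k. (real (multinomial_coeff \<alpha>) * u ^ k) powr p * rpow r \<alpha> powr p)"
  proof (intro sum_mono)
    fix \<alpha> :: "nat ^ 'n" assume "\<alpha> \<in> {\<alpha>. mdeg \<alpha> = k}"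
    then have "k = (\<Sum>i\<in>UNIV. \<alpha> $ i)" by (simp add: mdeg_def)
    then have "(\<Prod>i\<in>UNIV. (u powr p) ^ (\<alpha> $ i)) = (u ^ k) powr p"
      by (subst power_powr_commute[OF u]) (simp add: power_sum)
    moreover have "(\<Prod>i\<in>UNIV. (r $ i powr p) ^ (\<alpha> $ i)) = rpow r \<alpha> powr p"
      using r by (simp add: rpow_def prod_powr_distrib power_powr_commute)
    ultimately have "(\<Prod>i\<in>UNIV. (u powr p * r $ i powr p) ^ (\<alpha> $ i)) = (u ^ k) powr p * rpow r \<alpha> powr p"
      by (simp add: power_mult_distrib prod.distrib)
    moreover have "real (multinomial_coeff \<alpha>) \<le> real (multinomial_coeff \<alpha>) powr p"
      using p by (rule of_nat_le_of_nat_powr)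
    ultimately show "real (multinomial_coeff \<alpha>) * (\<Prod>i\<in>UNIV. (u powr p * r $ i powr p) ^ (\<alpha> $ i))
        \<le> (real (multinomial_coeff \<alpha>) * u ^ k) powr p * rpow r \<alpha> powr p"
      using u by (simp add: powr_mult mult_right_mono mult.assoc)
  qed
  finally show ?thesis .
qed

lemma cSup_le_cSup_divide:
  fixes A B :: "real set"
  assumes "A \<noteq> {}" "bdd_above B" "0 < c" "\<And>x. x \<in> A \<Longrightarrow> \<exists>y\<in>B. x * c \<le> y"
  shows "bdd_above A" and "Sup A \<le> Sup B / c"
proof -
  have le: "x \<le> Sup B / c" if x: "x \<in> A" for x
  proof -
    obtain y where "y \<in> B" "x * c \<le> y" using assms(4)[OF x] by blast
    then have "x * c \<le> Sup B" using cSup_upper[OF _ assms(2)] by (meson order_trans)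
    then show ?thesis using assms(3) by (simp add: pos_le_divide_eq)
  qed
  then show "bdd_above A" by (rule bdd_aboveI)
  show "Sup A \<le> Sup B / c" using assms(1) le by (rule cSup_least)
qed

lemma cSup_le_mult_cSup:
  fixes A B :: "real set"
  assumes "B \<noteq> {}" "bdd_above A" "0 \<in> A" "0 < N"
    and "\<And>y t. y \<in> B \<Longrightarrow> 0 \<le> t \<Longrightarrow> t < y \<Longrightarrow> t / N \<in> A"
  shows "Sup B \<le> N * Sup A"
proof (rule cSup_least)
  fix y assume "y \<in> B"
  have "0 \<le> Sup A" using cSup_upper[OF assms(3,2)] .
  show "y \<le> N * Sup A"
  proof (rule dense_le)
    fix t assume "t < y"
    show "t \<le> N * Sup A"
    proof (cases "0 \<le> t")
      case True
      then have "t / N \<le> Sup A" using assms(2,5) \<open>y \<in> B\<close> \<open>t < y\<close> by (intro cSup_upper) auto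
      then show ?thesis using assms(4) by (simp add: pos_divide_le_eq mult.commute)
    next
      case False
      moreover have "0 \<le> N * Sup A" using \<open>0 \<le> Sup A\<close> assms(4) by simp
      ultimately show ?thesis by linarith
    qed
  qed
qed (rule assms(1))

lemma norm_sum_graded_tail_le:
  fixes F :: "'a \<Rightarrow> 'b::real_normed_vector" and g :: "'a \<Rightarrow> nat"
  assumes fin: "\<And>K. finite {a. g a \<le> K}"
    and B: "summable B" "\<And>k. (\<Sum>a | g a = k. norm (F a)) \<le> B k"
    and H: "finite H" "\<And>a. a \<in> H \<Longrightarrow> K \<le> g a"
  shows "norm (sum F H) \<le> (\<Sum>i. B (i + K))"
proof -
  define M where "M = Suc (\<Sum>a\<in>H. g a)"
  have B_nonneg: "0 \<le> B k" for k
    using B(2)[of k] by (meson order_trans sum_nonneg norm_ge_zero)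
  have H_sub: "H \<subseteq> {a. g a \<in> {K..<M + K}}"
    using H by (auto simp: M_def intro: le_imp_less_Suc trans_le_add1 member_le_sum)
  have fin_I: "finite {a. g a \<in> {K..<M + K}}"
    by (rule finite_subset[OF _ fin[of "M + K"]]) auto
  have "norm (sum F H) \<le> (\<Sum>a\<in>H. norm (F a))" by (rule norm_sum)
  also have "\<dots> \<le> (\<Sum>a | g a \<in> {K..<M + K}. norm (F a))"
    using H_sub fin_I by (intro sum_mono2) auto
  also have "\<dots> = (\<Sum>k\<in>{K..<M + K}. \<Sum>a | a \<in> {a. g a \<in> {K..<M + K}} \<and> g a = k. norm (F a))"
    using fin_I by (intro sum.group[symmetric]) auto
  also have "\<dots> = (\<Sum>k\<in>{K..<M + K}. \<Sum>a | g a = k. norm (F a))" by (auto intro!: sum.cong)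
  also have "\<dots> \<le> (\<Sum>k\<in>{K..<M + K}. B k)" by (simp add: sum_mono B(2))
  also have "\<dots> = (\<Sum>i<M. B (i + K))"
    using sum.shift_bounds_nat_ivl[of B 0 K M] by (simp add: atLeast0LessThan)
  also have "\<dots> \<le> (\<Sum>i. B (i + K))"
    using B(1) B_nonneg by (intro sum_le_suminf summable_ignore_initial_segment) auto
  finally show ?thesis .
qed

(* The operator spaces below are not known to be complete (their sort is not banach), so
   summability of a family is obtained from its grouped series, not from absolute summability. *)
lemma has_sum_of_graded_sums:
  fixes F :: "'a \<Rightarrow> 'b::real_normed_vector" and g :: "'a \<Rightarrow> nat"
  assumes fin: "\<And>K. finite {a. g a \<le> K}"
    and B: "summable B" "\<And>k. (\<Sum>a | g a = k. norm (F a)) \<le> B k"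
    and grouped: "(\<lambda>k. \<Sum>a | g a = k. F a) sums S"
  shows "(F has_sum S) UNIV"
proof -
  have fin_less: "finite {a. g a < K}" for K
    using fin[of K] by (rule finite_subset[rotated]) auto
  have initial: "(\<Sum>a | g a < K. F a) = (\<Sum>k<K. \<Sum>a | g a = k. F a)" for K
  proof -
    have "(\<Sum>a | g a < K. F a) = (\<Sum>k<K. \<Sum>a | a \<in> {a. g a < K} \<and> g a = k. F a)"
      by (rule sum.group[symmetric]) (auto simp: fin_less)
    also have "\<dots> = (\<Sum>k<K. \<Sum>a | g a = k. F a)" by (auto intro!: sum.cong)
    finally show ?thesis .
  qed
  show ?thesis
    unfolding has_sum_def
  proof (rule tendstoI)
    fix e :: real assume "e > 0"
    obtain K1 where K1: "\<And>K. K \<ge> K1 \<Longrightarrow> dist (\<Sum>k<K. \<Sum>a | g a = k. F a) S < e / 2"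
      using tendstoD[OF grouped[unfolded sums_def], of "e / 2"] \<open>e > 0\<close>
      unfolding eventually_sequentially by auto
    obtain N where N: "\<And>n. n \<ge> N \<Longrightarrow> norm (\<Sum>i. B (i + n)) < e / 2"
      using suminf_exist_split[OF _ B(1), of "e / 2"] \<open>e > 0\<close> by auto
    define K where "K = max K1 N"
    have K_init: "dist (\<Sum>k<K. \<Sum>a | g a = k. F a) S < e / 2" and K_tail: "norm (\<Sum>i. B (i + K)) < e / 2"
      using K1 N by (simp_all add: K_def)
    have "dist (sum F Y) S < e" if Y: "finite Y" "{a. g a < K} \<subseteq> Y" for Y
    proof -
      have "sum F Y = (\<Sum>a | g a < K. F a) + sum F (Y - {a. g a < K})"
        using Y by (simp add: sum.subset_diff add.commute)
      then have "dist (sum F Y) S \<le> dist (\<Sum>a | g a < K. F a) S + norm (sum F (Y - {a. g a < K}))"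
        by (simp add: dist_norm norm_triangle_ineq4 algebra_simps
            order_trans[OF _ norm_triangle_ineq])
      also have "norm (sum F (Y - {a. g a < K})) \<le> (\<Sum>i. B (i + K))"
        using Y by (intro norm_sum_graded_tail_le[OF fin B]) auto
      finally show ?thesis
        using K_init K_tail initial[of K] by simp
    qed
    then show "\<forall>\<^sub>F Y in finite_subsets_at_top UNIV. dist (sum F Y) S < e"
      unfolding eventually_finite_subsets_at_top using fin_less by blast
  qed
qed

lemma power_scaled_bounded_if_summable:
  fixes C :: "nat \<Rightarrow> 'a::real_normed_vector"
  assumes "(\<lambda>k. s ^ k *\<^sub>R C k) summable_on UNIV"
  obtains M where "\<And>k. \<bar>s\<bar> ^ k * norm (C k) \<le> M"
proof -
  have "(\<lambda>k. s ^ k *\<^sub>R C k) \<longlonglongrightarrow> 0"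
    using summable_LIMSEQ_zero[OF summable_on_imp_summable[OF assms]] .
  then have "Bseq (\<lambda>k. s ^ k *\<^sub>R C k)" by (rule convergent_imp_Bseq[OF convergentI])
  then obtain M where "\<And>k. norm (s ^ k *\<^sub>R C k) \<le> M" unfolding Bseq_def by auto
  then show thesis using that[of M] by (simp add: power_abs)
qed

lemma ennreal_sum_le_infsum:
  fixes f :: "'a \<Rightarrow> ennreal"
  assumes "finite B" shows "sum f B \<le> infsum f UNIV"
  using assms by (simp add: nonneg_infsum_complete SUP_upper)

lemma zero_in_lq_ball: "(0 :: complex ^ 'n::finite) \<in> lq_ball q"
proof (cases "q = \<infinity>")
  case True
  have "range (\<lambda>i. cmod ((0::complex^'n) $ i)) = {0}" by auto
  then show ?thesis using True by (simp add: lq_ball_def lq_norm_def)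
qed (simp add: lq_ball_def lq_norm_def)

lemma lq_ball_l1_bound:
  fixes z :: "complex ^ 'n::finite"
  assumes q: "1 \<le> q" and z: "z \<in> lq_ball q"
  shows "real CARD('n) powr (qinv q - 1) * (\<Sum>i\<in>UNIV. cmod (z $ i)) < 1"
proof (cases "q = \<infinity>")
  case True
  then have "Max (range (\<lambda>i. cmod (z $ i))) < 1" using z by (simp add: lq_ball_def lq_norm_def)
  then have "cmod (z $ i) < 1" for i by simp
  then have "(\<Sum>i\<in>UNIV. cmod (z $ i)) < real CARD('n)"
    using sum_strict_mono[of UNIV "\<lambda>i. cmod (z $ i)" "\<lambda>_. 1"] by simp
  then show ?thesis using True by (simp add: qinv_def powr_minus_divide field_simps)
next
  case False
  define Q where "Q = real_of_ereal q"
  have Q: "1 \<le> Q" and qinv: "qinv q = 1 / Q"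
    using q False by (cases q; simp add: Q_def qinv_def)+
  define s where "s = (\<Sum>i\<in>UNIV. cmod (z $ i) powr Q)"
  have "s powr (1 / Q) < 1" using z False by (simp add: lq_ball_def lq_norm_def s_def Q_def)
  have "real CARD('n) powr (qinv q - 1) * (\<Sum>i\<in>UNIV. cmod (z $ i))
      \<le> real CARD('n) powr (qinv q - 1) * (real CARD('n) powr (1 - 1/Q) * s powr (1/Q))"
    unfolding s_def using Q by (intro mult_left_mono sum_le_card_powr_mult_sum_powr) auto
  also have "\<dots> = s powr (1/Q)"
    by (simp add: qinv mult.assoc[symmetric] powr_add[symmetric])
  finally show ?thesis using \<open>s powr (1 / Q) < 1\<close> by simp
qed

lemma lq_norm_axis:
  assumes "1 \<le> q" shows "lq_norm q (axis i w) = cmod w"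
proof (cases "q = \<infinity>")
  case True
  have "Max (range (\<lambda>j. cmod (axis i w $ j))) = cmod w"
    by (rule Max_eqI) (auto simp: axis_def intro!: image_eqI[of _ _ i])
  then show ?thesis using True by (simp add: lq_norm_def)
next
  case False
  define Q where "Q = real_of_ereal q"
  have Q: "1 \<le> Q" using assms False unfolding Q_def by (cases q) auto
  have "(\<Sum>j\<in>UNIV. cmod (axis i w $ j) powr Q) = cmod w powr Q"
    by (simp add: axis_def if_distrib[of "\<lambda>x. cmod x powr Q"] cong: if_cong)
  then show ?thesis using False Q by (simp add: lq_norm_def Q_def[symmetric] powr_powr)
qed

lemma axis_in_lq_ball: "1 \<le> q \<Longrightarrow> cmod w < 1 \<Longrightarrow> axis i w \<in> lq_ball q"
  by (simp add: lq_ball_def lq_norm_axis)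

lemma supnorm_upper:
  assumes "PH J \<Omega> a b" "z \<in> \<Omega>"
  shows "norm (phf J a b z) \<le> supnorm J \<Omega> a b"
proof -
  have "bounded (phf J a b ` \<Omega>)" using assms(1) unfolding PH_def by blast
  then have "bdd_above ((\<lambda>z. norm (phf J a b z)) ` \<Omega>)"
    by (auto simp: bounded_iff bdd_above_def)
  then show ?thesis unfolding supnorm_def by (rule cSUP_upper[OF assms(2)])
qed

lemma supnorm_nonneg: "PH J \<Omega> a b \<Longrightarrow> z \<in> \<Omega> \<Longrightarrow> 0 \<le> supnorm J \<Omega> a b"
  using supnorm_upper norm_ge_zero order_trans by blast

lemma supnorm_le_supnorm:
  assumes "\<Omega> \<noteq> {}" "PH J \<Omega>' a' b'" "\<And>z. z \<in> \<Omega> \<Longrightarrow> \<exists>z'\<in>\<Omega>'. phf J a b z = phf J a' b' z'"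
  shows "supnorm J \<Omega> a b \<le> supnorm J \<Omega>' a' b'"
  unfolding supnorm_def[of J \<Omega>]
proof (rule cSUP_least)
  fix z assume "z \<in> \<Omega>"
  then obtain z' where "z' \<in> \<Omega>'" "phf J a b z = phf J a' b' z'" using assms(3) by blast
  then show "norm (phf J a b z) \<le> supnorm J \<Omega>' a' b'" using supnorm_upper[OF assms(2)] by simp
qed (rule assms(1))

lemma phf_zero:
  fixes J :: "'h::{real_inner,complete_space} \<Rightarrow> 'h"
  shows "b 0 = 0 \<Longrightarrow> phf J a b 0 = a 0"
proof -
  assume "b 0 = 0"
  have "(\<Sum>\<^sub>\<infinity>\<alpha>. cmul J (zpow 0 \<alpha>) (a \<alpha>)) = (\<Sum>\<^sub>\<infinity>\<alpha>\<in>{0}. cmul J (zpow 0 \<alpha>) (a \<alpha>))"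
    and "(\<Sum>\<^sub>\<infinity>\<alpha>. cmul J (cnj (zpow 0 \<alpha>)) (hadj (b \<alpha>))) = (\<Sum>\<^sub>\<infinity>\<alpha>\<in>{0}. cmul J (cnj (zpow 0 \<alpha>)) (hadj (b \<alpha>)))"
    by (intro infsum_cong_neutral; simp add: zpow_zero)+
  then show ?thesis using \<open>b 0 = 0\<close> by (simp add: phf_def zpow_zero)
qed

lemma constant_coeff_bound:
  assumes J: "cstruct_hilbert J" and U: "cbounded_linear_on J JY U" and lam: "opnorm J U < lam"
    and p: "0 < p" and PH: "PH J \<Omega> a b" and "0 \<in> \<Omega>"
  shows "norm (U (a 0)) powr p + norm (U (b 0)) powr p \<le> lam powr p * supnorm J \<Omega> a b powr p"
proof -
  have b0: "b 0 = 0" and a0: "a 0 \<in> BH J" using PH by (auto simp: PH_def)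
  have "norm (U (a 0)) \<le> opnorm J U * norm (a 0)" by (rule opnorm_nonneg_bound(2)[OF J U a0])
  also have "\<dots> \<le> lam * supnorm J \<Omega> a b"
    using supnorm_upper[OF PH \<open>0 \<in> \<Omega>\<close>] phf_zero[of b J a, OF b0] lam opnorm_nonneg_bound(1)[OF J U]
    by (intro mult_mono) auto
  finally have "norm (U (a 0)) powr p \<le> (lam * supnorm J \<Omega> a b) powr p"
    using p by (intro powr_mono2) auto
  also have "\<dots> = lam powr p * supnorm J \<Omega> a b powr p"
    using lam opnorm_nonneg_bound(1)[OF J U] supnorm_nonneg[OF PH \<open>0 \<in> \<Omega>\<close>]
    by (simp add: powr_mult)
  finally show ?thesis
    using p by (simp add: b0 cbounded_linear_on_zero[OF J U])
qed

lemma zpow_vec1: "zpow (w :: complex ^ 1) \<beta> = (w $ 1) ^ (\<beta> $ 1)"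
  by (simp add: zpow_def)

lemma vec1_nth_eq: "(x :: 'a ^ 1) = vec (x $ 1)"
  by (simp add: vec_eq_iff)

lemma bij_vec1: "bij_betw vec UNIV (UNIV :: ('a ^ 1) set)"
  by (rule bij_betwI[of _ _ _ "\<lambda>x. x $ 1"]) (auto intro: vec1_nth_eq[symmetric])

lemma infsum_vec1: "infsum H (UNIV :: ('a ^ 1) set) = (\<Sum>\<^sub>\<infinity>k. H (vec k))"
  using infsum_reindex_bij_betw[OF bij_vec1, of H] by simp

lemma summable_on_vec1_iff: "H summable_on (UNIV :: ('a ^ 1) set) \<longleftrightarrow> (\<lambda>k. H (vec k)) summable_on UNIV"
  using summable_on_reindex_bij_betw[OF bij_vec1, of H] by simp

lemma vec_in_disc1: "vec w \<in> disc1 \<longleftrightarrow> cmod w < 1"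
  by (simp add: disc1_def)

lemma phf_disc1:
  "phf J a b (w :: complex ^ 1) = (\<Sum>\<^sub>\<infinity>k. cmul J ((w $ 1) ^ k) (a (vec k)))
                            + (\<Sum>\<^sub>\<infinity>k. cmul J (cnj ((w $ 1) ^ k)) (hadj (b (vec k))))"
  unfolding phf_def by (subst (1 2) infsum_vec1) (simp add: zpow_vec1)

lemma PH_disc1_summable:
  assumes "PH J disc1 a b" "cmod w < 1"
  shows "(\<lambda>k. cmul J (w ^ k) (a (vec k))) summable_on UNIV"
    and "(\<lambda>k. cmul J (cnj (w ^ k)) (hadj (b (vec k)))) summable_on UNIV"
proof -
  have "vec w \<in> disc1" using assms(2) by (simp add: vec_in_disc1)
  then have "(\<lambda>\<alpha>. cmul J (zpow (vec w) \<alpha>) (a \<alpha>)) summable_on UNIV"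
    and "(\<lambda>\<alpha>. cmul J (cnj (zpow (vec w) \<alpha>)) (hadj (b \<alpha>))) summable_on UNIV"
    using assms(1) unfolding PH_def by blast+
  then show "(\<lambda>k. cmul J (w ^ k) (a (vec k))) summable_on UNIV"
    and "(\<lambda>k. cmul J (cnj (w ^ k)) (hadj (b (vec k)))) summable_on UNIV"
    by (simp_all add: summable_on_vec1_iff zpow_vec1)
qed

lemma PH_disc1_coeff_bounded:
  assumes "PH J disc1 a b" "0 \<le> s" "s < 1"
  obtains M where "\<And>k. s ^ k * norm (a (vec k)) \<le> M" and "\<And>k. s ^ k * norm (hadj (b (vec k))) \<le> M"
proof -
  have s: "cmod (of_real s) < 1" using assms by simp
  have "(\<lambda>k. s ^ k *\<^sub>R a (vec k)) summable_on UNIV"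
    using PH_disc1_summable(1)[OF assms(1) s] by (simp flip: of_real_power)
  then obtain Ma where Ma: "\<And>k. \<bar>s\<bar> ^ k * norm (a (vec k)) \<le> Ma"
    by (rule power_scaled_bounded_if_summable) blast
  have "(\<lambda>k. s ^ k *\<^sub>R hadj (b (vec k))) summable_on UNIV"
    using PH_disc1_summable(2)[OF assms(1) s] by (simp flip: of_real_power)
  then obtain Mb where Mb: "\<And>k. \<bar>s\<bar> ^ k * norm (hadj (b (vec k))) \<le> Mb"
    by (rule power_scaled_bounded_if_summable) blast
  show thesis
    using Ma Mb assms(2) by (intro that[of "max Ma Mb"]) (auto intro: max.coboundedI1 max.coboundedI2)
qed

lemma prod_axis_power:
  fixes x :: "'a::comm_semiring_1"
  shows "(\<Prod>j\<in>UNIV. (axis i x $ j) ^ (\<alpha> $ j)) = (if \<alpha> = axis i (\<alpha> $ i) then x ^ (\<alpha> $ i) else 0)"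
proof (cases "\<alpha> = axis i (\<alpha> $ i)")
  case True
  have "(\<Prod>j\<in>UNIV. (axis i x $ j) ^ (\<alpha> $ j)) = (\<Prod>j\<in>UNIV. if j = i then x ^ (\<alpha> $ i) else 1)"
    by (subst True) (intro prod.cong refl; simp add: axis_def)
  then show ?thesis using True by simp
next
  case False
  then obtain j where "j \<noteq> i" "\<alpha> $ j \<noteq> 0" by (auto simp: vec_eq_iff axis_def split: if_splits)
  then have "(\<Prod>j\<in>UNIV. (axis i x $ j) ^ (\<alpha> $ j)) = 0"
    by (intro prod_zero) (auto simp: axis_def zero_power intro!: exI[of _ j])
  then show ?thesis using False by simp
qed

lemma zpow_axis: "zpow (axis i w) \<alpha> = (if \<alpha> = axis i (\<alpha> $ i) then w ^ (\<alpha> $ i) else 0)"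
  unfolding zpow_def by (rule prod_axis_power)

lemma rpow_axis: "rpow (axis i t) \<alpha> = (if \<alpha> = axis i (\<alpha> $ i) then t ^ (\<alpha> $ i) else 0)"
  unfolding rpow_def by (rule prod_axis_power)

lemma inj_axis: "inj (axis i)"
  by (rule injI) (auto simp: axis_eq_axis)

lemma infsum_axis:
  fixes F :: "nat ^ 'n::finite \<Rightarrow> 'b::{comm_monoid_add, t2_space}"
  assumes "\<And>\<alpha>. \<alpha> \<noteq> axis i (\<alpha> $ i) \<Longrightarrow> F \<alpha> = 0"
  shows "infsum F UNIV = (\<Sum>\<^sub>\<infinity>k. F (axis i k))"
proof -
  have "infsum F UNIV = infsum F (range (axis i))"
    using assms by (intro infsum_cong_neutral) auto
  then show ?thesis by (simp add: infsum_reindex[OF inj_axis] comp_def)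
qed

lemma summable_on_axis:
  fixes F :: "nat ^ 'n::finite \<Rightarrow> 'b::{comm_monoid_add, t2_space}"
  assumes "\<And>\<alpha>. \<alpha> \<noteq> axis i (\<alpha> $ i) \<Longrightarrow> F \<alpha> = 0" "F summable_on UNIV"
  shows "(\<lambda>k. F (axis i k)) summable_on UNIV"
proof -
  have "F summable_on range (axis i)"
    using assms summable_on_cong_neutral[of UNIV "range (axis i)" F F] by auto
  then show ?thesis by (simp add: summable_on_reindex[OF inj_axis] comp_def)
qed

lemma phf_axis:
  "phf J a b (axis i w) = (\<Sum>\<^sub>\<infinity>k. cmul J (w ^ k) (a (axis i k)))
                        + (\<Sum>\<^sub>\<infinity>k. cmul J (cnj (w ^ k)) (hadj (b (axis i k))))"
  unfolding phf_def by (subst (1 2) infsum_axis[of i]) (auto simp: zpow_axis)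

section \<open>Majorant series and admissible radii\<close>

definition majorant_sum ::
  "(('a \<Rightarrow>\<^sub>L 'a) \<Rightarrow> 'y::real_normed_vector) \<Rightarrow> real \<Rightarrow> ('i \<Rightarrow> ('a \<Rightarrow>\<^sub>L 'a)) \<Rightarrow> ('i \<Rightarrow> ('a \<Rightarrow>\<^sub>L 'a))
     \<Rightarrow> ('i \<Rightarrow> real) \<Rightarrow> ennreal" where
  "majorant_sum U p a b w = (\<Sum>\<^sub>\<infinity>\<alpha>. ennreal ((norm (U (a \<alpha>)) powr p + norm (U (b \<alpha>)) powr p) * w \<alpha> powr p))"

lemma majorant_sum_mono:
  assumes "\<And>\<alpha>. 0 \<le> w \<alpha>" "\<And>\<alpha>. w \<alpha> \<le> w' \<alpha>" "0 \<le> p"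
  shows "majorant_sum U p a b w \<le> majorant_sum U p a b w'"
  unfolding majorant_sum_def using assms
  by (intro infsum_mono ennreal_leI mult_left_mono powr_mono2 nonneg_summable_on_complete) simp_all

lemma majorant_sum_origin:
  assumes "\<And>\<alpha>. w \<alpha> = (if \<alpha> = 0 then 1 else 0)" "0 < p"
  shows "majorant_sum U p a b w = ennreal (norm (U (a 0)) powr p + norm (U (b 0)) powr p)"
proof -
  have "majorant_sum U p a b w = (\<Sum>\<^sub>\<infinity>\<alpha>\<in>{0}. ennreal ((norm (U (a \<alpha>)) powr p + norm (U (b \<alpha>)) powr p) * w \<alpha> powr p))"
    unfolding majorant_sum_def using assms by (intro infsum_cong_neutral) auto
  then show ?thesis using assms by simp
qed

definition bohr_admissible ::
  "('h::{real_inner,complete_space} \<Rightarrow> 'h) \<Rightarrow> (('h \<Rightarrow>\<^sub>L 'h) \<Rightarrow> 'y::real_normed_vector) \<Rightarrow> real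
     \<Rightarrow> (complex ^ 'n::finite) set \<Rightarrow> real \<Rightarrow> real \<Rightarrow> bool" where
  "bohr_admissible J U lam \<Omega> p r \<longleftrightarrow> (\<forall>a b. PH J \<Omega> a b \<longrightarrow>
     (SUP z\<in>(\<lambda>w. r *\<^sub>R w) ` \<Omega>. majorant_sum U p a b (\<lambda>\<alpha>. norm (zpow z \<alpha>)))
       \<le> ennreal (lam powr p * supnorm J \<Omega> a b powr p))"

definition arith_admissible ::
  "('h::{real_inner,complete_space} \<Rightarrow> 'h) \<Rightarrow> (('h \<Rightarrow>\<^sub>L 'h) \<Rightarrow> 'y::real_normed_vector) \<Rightarrow> real
     \<Rightarrow> (complex ^ 'n::finite) set \<Rightarrow> real \<Rightarrow> real ^ 'n \<Rightarrow> bool" where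
  "arith_admissible J U lam \<Omega> p r \<longleftrightarrow> (\<forall>a b. PH J \<Omega> a b \<longrightarrow>
     majorant_sum U p a b (rpow r) \<le> ennreal (lam powr p * supnorm J \<Omega> a b powr p))"

definition bohr_radii ::
  "('h::{real_inner,complete_space} \<Rightarrow> 'h) \<Rightarrow> (('h \<Rightarrow>\<^sub>L 'h) \<Rightarrow> 'y::real_normed_vector) \<Rightarrow> real
     \<Rightarrow> (complex ^ 'n::finite) set \<Rightarrow> real \<Rightarrow> real set" where
  "bohr_radii J U lam \<Omega> p = {r. 0 \<le> r \<and> bohr_admissible J U lam \<Omega> p r}"

definition arith_radii ::
  "('h::{real_inner,complete_space} \<Rightarrow> 'h) \<Rightarrow> (('h \<Rightarrow>\<^sub>L 'h) \<Rightarrow> 'y::real_normed_vector) \<Rightarrow> real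
     \<Rightarrow> (complex ^ 'n::finite) set \<Rightarrow> real \<Rightarrow> real set" where
  "arith_radii J U lam \<Omega> p = {(\<Sum>i\<in>UNIV. r $ i) / real CARD('n) | r :: real ^ 'n.
                                  (\<forall>i. 0 \<le> r $ i) \<and> arith_admissible J U lam \<Omega> p r}"

lemma Rlam_eq_Sup_bohr_radii: "Rlam J U lam \<Omega> p = Sup (bohr_radii J U lam \<Omega> p)"
  by (simp add: Rlam_def bohr_radii_def bohr_admissible_def majorant_sum_def)

lemma APlam_eq_Sup_arith_radii: "APlam J U lam \<Omega> p = Sup (arith_radii J U lam \<Omega> p)"
  by (simp add: APlam_def arith_radii_def arith_admissible_def majorant_sum_def)

lemma zero_in_bohr_radii:
  assumes "cstruct_hilbert J" "cbounded_linear_on J JY U" "opnorm J U < lam" "0 < p" "0 \<in> \<Omega>"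
  shows "0 \<in> bohr_radii J U lam \<Omega> p"
  unfolding bohr_radii_def bohr_admissible_def
proof (intro CollectI conjI order_refl allI impI)
  fix a b assume PH: "PH J \<Omega> a b"
  have "(\<lambda>w. 0 *\<^sub>R w) ` \<Omega> = {0}" using assms(5) by auto
  then show "(SUP z\<in>(\<lambda>w. 0 *\<^sub>R w) ` \<Omega>. majorant_sum U p a b (\<lambda>\<alpha>. norm (zpow z \<alpha>)))
      \<le> ennreal (lam powr p * supnorm J \<Omega> a b powr p)"
    using constant_coeff_bound[OF assms(1-4) PH assms(5)] assms(4)
    by (simp add: majorant_sum_origin zpow_zero ennreal_leI del: ennreal_plus)
qed

lemma zero_in_arith_radii:
  assumes "cstruct_hilbert J" "cbounded_linear_on J JY U" "opnorm J U < lam" "0 < p" "0 \<in> \<Omega>"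
  shows "0 \<in> arith_radii J U lam \<Omega> p"
proof -
  have "arith_admissible J U lam \<Omega> p 0"
    unfolding arith_admissible_def
    using constant_coeff_bound[OF assms(1-4) _ assms(5)] assms(4)
    by (auto simp: majorant_sum_origin rpow_zero simp del: ennreal_plus intro!: ennreal_leI)
  then show ?thesis unfolding arith_radii_def by (intro CollectI exI[of _ 0]) simp
qed

lemma vec_of_real_in_scaled_disc1:
  assumes "0 \<le> t" "t < \<rho>"
  shows "vec (complex_of_real t) \<in> (\<lambda>w. \<rho> *\<^sub>R w) ` disc1"
proof
  have \<rho>: "0 < \<rho>" using assms by linarith
  have "\<rho> *\<^sub>R complex_of_real (t / \<rho>) = complex_of_real t"
    using \<rho> by (simp add: scaleR_conv_of_real field_simps)
  then show "vec (complex_of_real t) = \<rho> *\<^sub>R vec (of_real (t / \<rho>))"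
    by (simp add: vec_eq_iff)
  show "vec (of_real (t / \<rho>)) \<in> disc1"
    unfolding vec_in_disc1 norm_of_real using assms \<rho> by (simp add: abs_of_nonneg)
qed

lemma PH_disc1_single_coeff:
  fixes J :: "'h::{real_inner,complete_space} \<Rightarrow> 'h"
  assumes J: "cstruct_hilbert J" and T: "T \<in> BH J"
  defines "a \<equiv> \<lambda>\<beta> :: nat ^ 1. if \<beta> = vec 1 then T else 0"
  shows "PH J disc1 a (\<lambda>_. 0)" and "supnorm J disc1 a (\<lambda>_. 0) \<le> 2 * norm T"
proof -
  have phf_a: "phf J a (\<lambda>_. 0) w = cmul J (w $ 1) T" for w :: "complex ^ 1"
  proof -
    have "(\<Sum>\<^sub>\<infinity>\<beta>. cmul J (zpow w \<beta>) (a \<beta>)) = (\<Sum>\<^sub>\<infinity>\<beta>\<in>{vec 1}. cmul J (zpow w \<beta>) (a \<beta>))"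
      by (intro infsum_cong_neutral) (auto simp: a_def)
    then show ?thesis by (simp add: phf_def a_def zpow_vec1)
  qed
  have norm_phf: "norm (phf J a (\<lambda>_. 0) w) \<le> 2 * norm T" if "w \<in> disc1" for w
  proof -
    have "norm (phf J a (\<lambda>_. 0) w) \<le> 2 * cmod (w $ 1) * norm T" unfolding phf_a by (rule norm_cmul_le[OF J])
    also have "\<dots> \<le> 2 * 1 * norm T"
      using that by (intro mult_right_mono mult_left_mono) (auto simp: disc1_def)
    finally show ?thesis by simp
  qed
  show "PH J disc1 a (\<lambda>_. 0)"
    unfolding PH_def
  proof (intro conjI allI ballI)
    show "a \<beta> \<in> BH J" "0 \<in> BH J" for \<beta> using T BH_zero[OF J] by (simp_all add: a_def)
    show "(\<lambda>\<beta>. cmul J (zpow w \<beta>) (a \<beta>)) summable_on UNIV" for w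
      using summable_on_cong_neutral[of "{vec 1}" UNIV "\<lambda>\<beta>. cmul J (zpow w \<beta>) (a \<beta>)"]
      by (auto simp: a_def)
    show "bounded (phf J a (\<lambda>_. 0) ` disc1)" using norm_phf by (auto simp: bounded_iff)
  qed simp_all
  show "supnorm J disc1 a (\<lambda>_. 0) \<le> 2 * norm T"
    unfolding supnorm_def using norm_phf by (intro cSUP_least) (auto simp: disc1_def intro!: exI[of _ 0])
qed

lemma bohr_admissible_le:
  fixes J :: "'h::{real_inner,complete_space} \<Rightarrow> 'h" and U :: "('h \<Rightarrow>\<^sub>L 'h) \<Rightarrow> 'y::real_normed_vector"
  assumes J: "cstruct_hilbert J" and U: "cbounded_linear_on J JY U" and T: "T \<in> BH J" "U T \<noteq> 0"
    and lam: "0 \<le> lam" and p: "0 < p" and adm: "bohr_admissible J U lam disc1 p \<rho>"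
  shows "\<rho> \<le> 2 * lam * norm T / norm (U T)"
proof (rule dense_le)
  define a where "a = (\<lambda>\<beta> :: nat ^ 1. if \<beta> = vec 1 then T else 0)"
  note PH = PH_disc1_single_coeff(1)[OF J T(1), folded a_def]
    and sup = PH_disc1_single_coeff(2)[OF J T(1), folded a_def]
  fix s assume "s < \<rho>"
  show "s \<le> 2 * lam * norm T / norm (U T)"
  proof (cases "s \<le> 0")
    case False
    have "ennreal ((norm (U T) * s) powr p)
        = (\<Sum>\<beta>\<in>{vec 1}. ennreal ((norm (U (a \<beta>)) powr p + norm (U 0) powr p)
                            * norm (zpow (vec (of_real s)) \<beta>) powr p))"
      using False p by (simp add: a_def zpow_vec1 cbounded_linear_on_zero[OF J U] powr_mult)
    also have "\<dots> \<le> majorant_sum U p a (\<lambda>_. 0) (\<lambda>\<beta>. norm (zpow (vec (of_real s)) \<beta>))"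
      unfolding majorant_sum_def by (rule ennreal_sum_le_infsum) simp
    also have "\<dots> \<le> (SUP z\<in>(\<lambda>w. \<rho> *\<^sub>R w) ` disc1. majorant_sum U p a (\<lambda>_. 0) (\<lambda>\<beta>. norm (zpow z \<beta>)))"
      using False \<open>s < \<rho>\<close> by (intro SUP_upper vec_of_real_in_scaled_disc1) auto
    also have "\<dots> \<le> ennreal (lam powr p * supnorm J disc1 a (\<lambda>_. 0) powr p)"
      using adm PH by (simp add: bohr_admissible_def)
    also have "\<dots> \<le> ennreal (lam powr p * (2 * norm T) powr p)"
      using sup supnorm_nonneg[OF PH, of 0] p
      by (intro ennreal_leI mult_left_mono powr_mono2) (auto simp: disc1_def)
    finally have "(norm (U T) * s) powr p \<le> lam powr p * (2 * norm T) powr p"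
      by (simp add: ennreal_le_iff)
    also have "\<dots> = (lam * (2 * norm T)) powr p" using lam by (simp add: powr_mult)
    finally have "(norm (U T) * s) powr p \<le> (lam * (2 * norm T)) powr p" .
    then have "norm (U T) * s \<le> lam * (2 * norm T)"
    proof (rule contrapos_pp)
      assume "\<not> norm (U T) * s \<le> lam * (2 * norm T)"
      then have "(lam * (2 * norm T)) powr p < (norm (U T) * s) powr p"
        using lam p by (intro powr_less_mono2) auto
      then show "\<not> (norm (U T) * s) powr p \<le> (lam * (2 * norm T)) powr p" by simp
    qed
    then show ?thesis using T(2) by (simp add: field_simps)
  next
    case True
    moreover have "0 \<le> 2 * lam * norm T / norm (U T)" using lam by simp
    ultimately show ?thesis by linarith
  qed
qed

section \<open>Restriction to a coordinate axis\<close>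

lemma PH_axis_restrict:
  fixes a b :: "nat ^ 'n::finite \<Rightarrow> ('a::{real_inner,complete_space} \<Rightarrow>\<^sub>L 'a)"
  assumes PH: "PH J (lq_ball q) a b" and q: "1 \<le> q"
  shows "PH J disc1 (\<lambda>\<beta>. a (axis i (\<beta> $ 1))) (\<lambda>\<beta>. b (axis i (\<beta> $ 1)))"
    and "supnorm J disc1 (\<lambda>\<beta>. a (axis i (\<beta> $ 1))) (\<lambda>\<beta>. b (axis i (\<beta> $ 1))) \<le> supnorm J (lq_ball q) a b"
proof -
  have phf_eq: "phf J (\<lambda>\<beta>. a (axis i (\<beta> $ 1))) (\<lambda>\<beta>. b (axis i (\<beta> $ 1))) w = phf J a b (axis i (w $ 1))"
    for w :: "complex ^ 1"
    by (simp add: phf_disc1 phf_axis)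
  have in_ball: "axis i (w $ 1) \<in> lq_ball q" if "w \<in> disc1" for w :: "complex ^ 1"
    using that q by (simp add: disc1_def axis_in_lq_ball)
  show "PH J disc1 (\<lambda>\<beta>. a (axis i (\<beta> $ 1))) (\<lambda>\<beta>. b (axis i (\<beta> $ 1)))"
    unfolding PH_def
  proof (intro conjI allI ballI)
    show "a (axis i (\<beta> $ 1)) \<in> BH J" "b (axis i (\<beta> $ 1)) \<in> BH J" for \<beta>
      using PH by (simp_all add: PH_def)
    have "b 0 = 0" using PH by (simp add: PH_def)
    moreover have "axis i 0 = (0 :: nat ^ 'n)" by (simp add: axis_def vec_eq_iff)
    ultimately show "b (axis i ((0 :: nat ^ 1) $ 1)) = 0" by (metis zero_index)
  next
    fix w :: "complex ^ 1" assume "w \<in> disc1"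
    then have "(\<lambda>\<alpha>. cmul J (zpow (axis i (w $ 1)) \<alpha>) (a \<alpha>)) summable_on UNIV"
      and "(\<lambda>\<alpha>. cmul J (cnj (zpow (axis i (w $ 1)) \<alpha>)) (hadj (b \<alpha>))) summable_on UNIV"
      using PH in_ball unfolding PH_def by blast+
    then have "(\<lambda>k. cmul J ((w $ 1) ^ k) (a (axis i k))) summable_on UNIV"
      and "(\<lambda>k. cmul J (cnj ((w $ 1) ^ k)) (hadj (b (axis i k)))) summable_on UNIV"
      by (auto dest!: summable_on_axis[of i, rotated] simp: zpow_axis)
    then show "(\<lambda>\<beta>. cmul J (zpow w \<beta>) (a (axis i (\<beta> $ 1)))) summable_on UNIV"
      and "(\<lambda>\<beta>. cmul J (cnj (zpow w \<beta>)) (hadj (b (axis i (\<beta> $ 1))))) summable_on UNIV"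
      by (simp_all add: summable_on_vec1_iff zpow_vec1)
  next
    have "phf J (\<lambda>\<beta>. a (axis i (\<beta> $ 1))) (\<lambda>\<beta>. b (axis i (\<beta> $ 1))) ` disc1 \<subseteq> phf J a b ` lq_ball q"
      using phf_eq in_ball by auto
    then show "bounded (phf J (\<lambda>\<beta>. a (axis i (\<beta> $ 1))) (\<lambda>\<beta>. b (axis i (\<beta> $ 1))) ` disc1)"
      using PH unfolding PH_def by (meson bounded_subset)
  qed
  show "supnorm J disc1 (\<lambda>\<beta>. a (axis i (\<beta> $ 1))) (\<lambda>\<beta>. b (axis i (\<beta> $ 1))) \<le> supnorm J (lq_ball q) a b"
    using phf_eq in_ball by (intro supnorm_le_supnorm[OF _ PH]) (auto simp: disc1_def intro!: exI[of _ 0])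
qed

lemma majorant_sum_axis:
  assumes "0 \<le> t"
  shows "majorant_sum U p a b (rpow (axis i t))
           = majorant_sum U p (\<lambda>\<beta> :: nat ^ 1. a (axis i (\<beta> $ 1))) (\<lambda>\<beta>. b (axis i (\<beta> $ 1)))
               (\<lambda>\<beta>. norm (zpow (vec (of_real t)) \<beta>))"
proof -
  define c where "c \<alpha> = norm (U (a \<alpha>)) powr p + norm (U (b \<alpha>)) powr p" for \<alpha>
  have "majorant_sum U p a b (rpow (axis i t)) = (\<Sum>\<^sub>\<infinity>k. ennreal (c (axis i k) * (t ^ k) powr p))"
    unfolding majorant_sum_def c_def[symmetric] by (subst infsum_axis[where i = i]) (auto simp: rpow_axis)
  also have "\<dots> = (\<Sum>\<^sub>\<infinity>\<beta>::nat ^ 1. ennreal (c (axis i (\<beta> $ 1)) * norm (zpow (vec (of_real t)) \<beta>) powr p))"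
    by (subst infsum_vec1) (simp add: zpow_vec1 norm_power assms)
  finally show ?thesis by (simp add: majorant_sum_def c_def)
qed

lemma arith_admissible_axis:
  fixes J :: "'h::{real_inner,complete_space} \<Rightarrow> 'h" and U :: "('h \<Rightarrow>\<^sub>L 'h) \<Rightarrow> 'y::real_normed_vector"
  assumes p: "0 \<le> p" and q: "1 \<le> q" and adm: "bohr_admissible J U lam disc1 p \<rho>"
    and t: "0 \<le> t" "t < \<rho>"
  shows "arith_admissible J U lam (lq_ball q :: (complex ^ 'n::finite) set) p (axis i t)"
  unfolding arith_admissible_def
proof (intro allI impI)
  fix a b :: "nat ^ 'n \<Rightarrow> ('h \<Rightarrow>\<^sub>L 'h)" assume PH: "PH J (lq_ball q) a b"
  define a' b' where "a' = (\<lambda>\<beta> :: nat ^ 1. a (axis i (\<beta> $ 1)))" and "b' = (\<lambda>\<beta> :: nat ^ 1. b (axis i (\<beta> $ 1)))"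
  have PH': "PH J disc1 a' b'" and sup': "supnorm J disc1 a' b' \<le> supnorm J (lq_ball q) a b"
    unfolding a'_def b'_def by (rule PH_axis_restrict[OF PH q])+
  have t_in: "vec (of_real t) \<in> (\<lambda>w. \<rho> *\<^sub>R w) ` disc1"
    using t by (rule vec_of_real_in_scaled_disc1)
  have "majorant_sum U p a b (rpow (axis i t)) = majorant_sum U p a' b' (\<lambda>\<beta>. norm (zpow (vec (of_real t)) \<beta>))"
    unfolding a'_def b'_def by (rule majorant_sum_axis[OF t(1)])
  also have "\<dots> \<le> (SUP z\<in>(\<lambda>w. \<rho> *\<^sub>R w) ` disc1. majorant_sum U p a' b' (\<lambda>\<beta>. norm (zpow z \<beta>)))"
    using t_in by (rule SUP_upper)
  also have "\<dots> \<le> ennreal (lam powr p * supnorm J disc1 a' b' powr p)"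
    using adm PH' by (simp add: bohr_admissible_def)
  also have "\<dots> \<le> ennreal (lam powr p * supnorm J (lq_ball q) a b powr p)"
    using sup' supnorm_nonneg[OF PH', of 0] p
    by (intro ennreal_leI mult_left_mono powr_mono2) (auto simp: disc1_def)
  finally show "majorant_sum U p a b (rpow (axis i t)) \<le> ennreal (lam powr p * supnorm J (lq_ball q) a b powr p)" .
qed

lemma arith_radii_axis:
  fixes J :: "'h::{real_inner,complete_space} \<Rightarrow> 'h" and U :: "('h \<Rightarrow>\<^sub>L 'h) \<Rightarrow> 'y::real_normed_vector"
  assumes p: "0 \<le> p" and q: "1 \<le> q" and \<rho>: "\<rho> \<in> bohr_radii J U lam disc1 p" and t: "0 \<le> t" "t < \<rho>"
  shows "t / real CARD('n::finite) \<in> arith_radii J U lam (lq_ball q :: (complex ^ 'n) set) p"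
proof -
  have "arith_admissible J U lam (lq_ball q :: (complex ^ 'n) set) p (axis undefined t)"
    using \<rho> by (intro arith_admissible_axis[OF p q _ t]) (simp add: bohr_radii_def)
  moreover have "(\<Sum>i\<in>UNIV. axis undefined t $ i) = t" by (simp add: axis_def)
  ultimately show ?thesis
    using t unfolding arith_radii_def by (intro CollectI exI[of _ "axis undefined t"]) (simp add: axis_def)
qed

section \<open>Lifting along the diagonal\<close>

(* The coefficients of z \<mapsto> g (u * (z_1 + ... + z_n)) when g has the coefficients a. *)
definition diag_coeff :: "real \<Rightarrow> (nat ^ 1 \<Rightarrow> 'a::real_vector) \<Rightarrow> nat ^ 'n::finite \<Rightarrow> 'a" where
  "diag_coeff u a \<alpha> = (real (multinomial_coeff \<alpha>) * u ^ mdeg \<alpha>) *\<^sub>R a (vec (mdeg \<alpha>))"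

lemma has_sum_regroup_by_mdeg:
  fixes C :: "nat \<Rightarrow> ('a::real_inner \<Rightarrow>\<^sub>L 'a)" and \<omega> :: "nat ^ 'n::finite \<Rightarrow> complex"
  assumes J: "cstruct_hilbert J"
    and \<omega>: "\<And>k. (\<Sum>\<alpha> | mdeg \<alpha> = k. cmod (\<omega> \<alpha>)) = t ^ k"
    and t: "0 \<le> t" "t < s"
    and C: "\<And>k. s ^ k * norm (C k) \<le> M"
    and grouped: "(\<lambda>k. cmul J (\<Sum>\<alpha> | mdeg \<alpha> = k. \<omega> \<alpha>) (C k)) summable_on UNIV"
  shows "((\<lambda>\<alpha>. cmul J (\<omega> \<alpha>) (C (mdeg \<alpha>))) has_sum
           (\<Sum>\<^sub>\<infinity>k. cmul J (\<Sum>\<alpha> | mdeg \<alpha> = k. \<omega> \<alpha>) (C k))) UNIV"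
proof (rule has_sum_of_graded_sums)
  define x where "x = t / s"
  have s: "0 < s" and x: "0 \<le> x" "x < 1" using t by (auto simp: x_def)
  show "summable (\<lambda>k. 2 * M * x ^ k)"
    using x by (intro summable_mult summable_geometric) auto
  show "(\<Sum>\<alpha> | mdeg \<alpha> = k. norm (cmul J (\<omega> \<alpha>) (C (mdeg \<alpha>)))) \<le> 2 * M * x ^ k" for k
  proof -
    have "(\<Sum>\<alpha> | mdeg \<alpha> = k. norm (cmul J (\<omega> \<alpha>) (C (mdeg \<alpha>))))
        \<le> (\<Sum>\<alpha> | mdeg \<alpha> = k. 2 * cmod (\<omega> \<alpha>) * norm (C k))"
      by (intro sum_mono) (use norm_cmul_le[OF J] in simp)
    also have "\<dots> = 2 * t ^ k * norm (C k)"
      by (simp add: \<omega> sum_distrib_left[symmetric] sum_distrib_right[symmetric])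
    also have "\<dots> = 2 * (x ^ k * (s ^ k * norm (C k)))"
      using s by (simp add: x_def power_divide)
    also have "\<dots> \<le> 2 * M * x ^ k"
      using mult_left_mono[OF C[of k], of "x ^ k"] x by (simp add: mult.commute)
    finally show ?thesis .
  qed
  show "(\<lambda>k. \<Sum>\<alpha> | mdeg \<alpha> = k. cmul J (\<omega> \<alpha>) (C (mdeg \<alpha>)))
          sums (\<Sum>\<^sub>\<infinity>k. cmul J (\<Sum>\<alpha> | mdeg \<alpha> = k. \<omega> \<alpha>) (C k))"
    using has_sum_imp_sums[OF has_sum_infsum[OF grouped]] by (simp add: cmul_sum_left)
qed (rule finite_mdeg_le)

lemma has_sum_diag_coeff:
  fixes a b :: "nat ^ 1 \<Rightarrow> ('a::{real_inner,complete_space} \<Rightarrow>\<^sub>L 'a)" and z :: "complex ^ 'n::finite"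
  assumes J: "cstruct_hilbert J" and PH: "PH J disc1 a b"
    and u: "0 \<le> u" and z: "u * (\<Sum>i\<in>UNIV. cmod (z $ i)) < 1"
  defines "w \<equiv> of_real u * (\<Sum>i\<in>UNIV. z $ i)"
  shows "((\<lambda>\<alpha>. cmul J (zpow z \<alpha>) (diag_coeff u a \<alpha>)) has_sum (\<Sum>\<^sub>\<infinity>k. cmul J (w ^ k) (a (vec k)))) UNIV"
    and "((\<lambda>\<alpha>. cmul J (cnj (zpow z \<alpha>)) (hadj (diag_coeff u b \<alpha>))) has_sum
           (\<Sum>\<^sub>\<infinity>k. cmul J (cnj (w ^ k)) (hadj (b (vec k))))) UNIV"
    and "cmod w < 1"
proof -
  define t where "t = u * (\<Sum>i\<in>UNIV. cmod (z $ i))"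
  define \<omega> where "\<omega> \<alpha> = of_real (real (multinomial_coeff \<alpha>) * u ^ mdeg \<alpha>) * zpow z \<alpha>" for \<alpha>
  have t: "0 \<le> t" "t < (1 + t) / 2" "(1 + t) / 2 < 1" using u z by (auto simp: t_def sum_nonneg)
  show w: "cmod w < 1"
    using u z norm_sum[of "\<lambda>i. z $ i" UNIV] unfolding w_def
    by (simp add: norm_mult) (meson mult_left_mono order.strict_trans1)
  obtain M where Ma: "\<And>k. ((1 + t) / 2) ^ k * norm (a (vec k)) \<le> M"
    and Mb: "\<And>k. ((1 + t) / 2) ^ k * norm (hadj (b (vec k))) \<le> M"
    using PH_disc1_coeff_bounded[OF PH, of "(1 + t) / 2"] t by auto
  have \<omega>_abs: "(\<Sum>\<alpha> | mdeg \<alpha> = k. cmod (\<omega> \<alpha>)) = t ^ k" for k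
  proof -
    have "(\<Sum>\<alpha> | mdeg \<alpha> = k. cmod (\<omega> \<alpha>))
        = (\<Sum>\<alpha> | mdeg \<alpha> = k. of_real (real (multinomial_coeff \<alpha>) * u ^ k) * (\<Prod>i\<in>UNIV. cmod (z $ i) ^ (\<alpha> $ i)))"
      using u by (intro sum.cong refl) (simp add: \<omega>_def norm_mult zpow_def norm_power flip: prod_norm)
    then show ?thesis using multinomial_theorem_scaled[of u "\<lambda>i. cmod (z $ i)" k] by (simp add: t_def)
  qed
  have \<omega>_sum: "(\<Sum>\<alpha> | mdeg \<alpha> = k. \<omega> \<alpha>) = w ^ k" for k
    unfolding w_def multinomial_theorem_scaled by (intro sum.cong refl) (simp add: \<omega>_def zpow_def)
  have "((\<lambda>\<alpha>. cmul J (\<omega> \<alpha>) (a (vec (mdeg \<alpha>)))) has_sum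
          (\<Sum>\<^sub>\<infinity>k. cmul J (\<Sum>\<alpha> | mdeg \<alpha> = k. \<omega> \<alpha>) (a (vec k)))) UNIV"
    using PH_disc1_summable(1)[OF PH w]
    by (intro has_sum_regroup_by_mdeg[OF J \<omega>_abs t(1,2) Ma]) (simp add: \<omega>_sum)
  then show "((\<lambda>\<alpha>. cmul J (zpow z \<alpha>) (diag_coeff u a \<alpha>)) has_sum (\<Sum>\<^sub>\<infinity>k. cmul J (w ^ k) (a (vec k)))) UNIV"
    unfolding \<omega>_sum by (simp add: \<omega>_def diag_coeff_def cmul_scaleR_right)
  have "((\<lambda>\<alpha>. cmul J (cnj (\<omega> \<alpha>)) (hadj (b (vec (mdeg \<alpha>))))) has_sum
          (\<Sum>\<^sub>\<infinity>k. cmul J (\<Sum>\<alpha> | mdeg \<alpha> = k. cnj (\<omega> \<alpha>)) (hadj (b (vec k))))) UNIV"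
    using PH_disc1_summable(2)[OF PH w]
    by (intro has_sum_regroup_by_mdeg[OF J _ t(1,2) Mb]) (simp_all add: \<omega>_abs \<omega>_sum flip: cnj_sum)
  then show "((\<lambda>\<alpha>. cmul J (cnj (zpow z \<alpha>)) (hadj (diag_coeff u b \<alpha>))) has_sum
           (\<Sum>\<^sub>\<infinity>k. cmul J (cnj (w ^ k)) (hadj (b (vec k))))) UNIV"
    unfolding cnj_sum[symmetric] \<omega>_sum
    by (simp add: \<omega>_def diag_coeff_def cmul_scaleR_right hadj_scaleR)
qed

lemma PH_diag_coeff:
  fixes a b :: "nat ^ 1 \<Rightarrow> ('a::{real_inner,complete_space} \<Rightarrow>\<^sub>L 'a)"
  assumes J: "cstruct_hilbert J" and PH: "PH J disc1 a b" and q: "1 \<le> q"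
  defines "u \<equiv> real CARD('n::finite) powr (qinv q - 1)"
  shows "PH J (lq_ball q :: (complex ^ 'n) set) (diag_coeff u a) (diag_coeff u b)"
    and "supnorm J (lq_ball q :: (complex ^ 'n) set) (diag_coeff u a) (diag_coeff u b) \<le> supnorm J disc1 a b"
proof -
  define L where "L z = of_real u * (\<Sum>i\<in>UNIV. z $ i)" for z :: "complex ^ 'n"
  have u: "0 \<le> u" by (simp add: u_def)
  have sums: "((\<lambda>\<alpha>. cmul J (zpow z \<alpha>) (diag_coeff u a \<alpha>)) has_sum (\<Sum>\<^sub>\<infinity>k. cmul J (L z ^ k) (a (vec k)))) UNIV"
    "((\<lambda>\<alpha>. cmul J (cnj (zpow z \<alpha>)) (hadj (diag_coeff u b \<alpha>))) has_sum
        (\<Sum>\<^sub>\<infinity>k. cmul J (cnj (L z ^ k)) (hadj (b (vec k))))) UNIV"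
    and in_disc: "vec (L z) \<in> disc1" if "z \<in> lq_ball q" for z
    using has_sum_diag_coeff[OF J PH u] lq_ball_l1_bound[OF q that]
    by (simp_all add: L_def u_def vec_in_disc1)
  have phf_eq: "phf J (diag_coeff u a) (diag_coeff u b) z = phf J a b (vec (L z))" if "z \<in> lq_ball q" for z :: "complex ^ 'n"
    unfolding phf_def[of J "diag_coeff u a"] phf_disc1 using sums[OF that] by (simp add: infsumI)
  show "PH J (lq_ball q :: (complex ^ 'n) set) (diag_coeff u a) (diag_coeff u b)"
    unfolding PH_def
  proof (intro conjI allI ballI)
    show "diag_coeff u a \<alpha> \<in> BH J" "diag_coeff u b \<alpha> \<in> BH J" for \<alpha>
      using PH by (auto simp: PH_def diag_coeff_def intro: BH_scaleR[OF J])
    show "diag_coeff u b 0 = 0" using PH by (simp add: PH_def diag_coeff_def mdeg_def)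
    show "(\<lambda>\<alpha>. cmul J (zpow z \<alpha>) (diag_coeff u a \<alpha>)) summable_on UNIV"
      and "(\<lambda>\<alpha>. cmul J (cnj (zpow z \<alpha>)) (hadj (diag_coeff u b \<alpha>))) summable_on UNIV"
      if "z \<in> lq_ball q" for z :: "complex ^ 'n"
      using sums[OF that] by (auto simp: summable_on_def)
    have "phf J (diag_coeff u a) (diag_coeff u b) ` (lq_ball q :: (complex ^ 'n) set) \<subseteq> phf J a b ` disc1"
      using phf_eq in_disc by auto
    then show "bounded (phf J (diag_coeff u a) (diag_coeff u b) ` (lq_ball q :: (complex ^ 'n) set))"
      using PH unfolding PH_def by (meson bounded_subset)
  qed
  show "supnorm J (lq_ball q :: (complex ^ 'n) set) (diag_coeff u a) (diag_coeff u b) \<le> supnorm J disc1 a b"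
    using zero_in_lq_ball phf_eq in_disc by (intro supnorm_le_supnorm[OF _ PH]) auto
qed

lemma norm_U_diag_coeff:
  assumes "cbounded_linear_on J JY U" "a (vec (mdeg \<alpha>)) \<in> BH J" "0 \<le> u"
  shows "norm (U (diag_coeff u a \<alpha>)) = (real (multinomial_coeff \<alpha>) * u ^ mdeg \<alpha>) * norm (U (a (vec (mdeg \<alpha>))))"
  using assms by (simp add: diag_coeff_def cbounded_linear_on_scaleR)

lemma majorant_term_le_diag_block:
  fixes a b :: "nat ^ 1 \<Rightarrow> ('a::real_normed_vector \<Rightarrow>\<^sub>L 'a)" and r :: "real ^ 'n::finite"
  assumes U: "cbounded_linear_on J JY U" and BH: "\<And>\<beta>. a \<beta> \<in> BH J" "\<And>\<beta>. b \<beta> \<in> BH J"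
    and p: "1 \<le> p" and u: "0 \<le> u" and r: "\<And>i. 0 \<le> r $ i"
  shows "(norm (U (a (vec k))) powr p + norm (U (b (vec k))) powr p)
           * ((u * (\<Sum>i\<in>UNIV. r $ i powr p) powr (1/p)) ^ k) powr p
         \<le> (\<Sum>\<alpha> | mdeg \<alpha> = k. (norm (U (diag_coeff u a \<alpha>)) powr p + norm (U (diag_coeff u b \<alpha>)) powr p)
                                * rpow r \<alpha> powr p)"
proof -
  define c where "c = norm (U (a (vec k))) powr p + norm (U (b (vec k))) powr p"
  have "c * ((u * (\<Sum>i\<in>UNIV. r $ i powr p) powr (1/p)) ^ k) powr p
      \<le> c * (\<Sum>\<alpha> | mdeg \<alpha> = k. (real (multinomial_coeff \<alpha>) * u ^ k) powr p * rpow r \<alpha> powr p)"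
    using pnorm_power_le_multinomial_sum[OF p r u] by (intro mult_left_mono) (simp_all add: c_def)
  also have "\<dots> = (\<Sum>\<alpha> | mdeg \<alpha> = k. (norm (U (diag_coeff u a \<alpha>)) powr p + norm (U (diag_coeff u b \<alpha>)) powr p)
                                * rpow r \<alpha> powr p)"
    unfolding sum_distrib_left
    using U BH u by (intro sum.cong refl) (simp add: norm_U_diag_coeff powr_mult c_def algebra_simps)
  finally show ?thesis by (simp add: c_def)
qed

lemma majorant_sum_le_diag_coeff:
  fixes a b :: "nat ^ 1 \<Rightarrow> ('a::real_normed_vector \<Rightarrow>\<^sub>L 'a)" and r :: "real ^ 'n::finite"
    and p u :: real
  defines "\<rho> \<equiv> u * (\<Sum>i\<in>UNIV. r $ i powr p) powr (1/p)"
  assumes U: "cbounded_linear_on J JY U" and BH: "\<And>\<beta>. a \<beta> \<in> BH J" "\<And>\<beta>. b \<beta> \<in> BH J"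
    and p: "1 \<le> p" and u: "0 \<le> u" and r: "\<And>i. 0 \<le> r $ i"
    and z: "z \<in> (\<lambda>w. \<rho> *\<^sub>R w) ` disc1"
  shows "majorant_sum U p a b (\<lambda>\<beta>. norm (zpow z \<beta>)) \<le> majorant_sum U p (diag_coeff u a) (diag_coeff u b) (rpow r)"
proof -
  define c where "c k = norm (U (a (vec k))) powr p + norm (U (b (vec k))) powr p" for k
  define RF where "RF \<alpha> = (norm (U (diag_coeff u a \<alpha>)) powr p + norm (U (diag_coeff u b \<alpha>)) powr p)
                              * rpow r \<alpha> powr p" for \<alpha> :: "nat ^ 'n"
  have \<rho>: "0 \<le> \<rho>" using u by (simp add: \<rho>_def)
  have "majorant_sum U p a b (\<lambda>\<beta>. norm (zpow z \<beta>)) \<le> majorant_sum U p a b (\<lambda>\<beta>. \<rho> ^ (\<beta> $ 1))"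
  proof (rule majorant_sum_mono)
    obtain w where "cmod (w $ 1) < 1" "z = \<rho> *\<^sub>R w" using z by (auto simp: disc1_def)
    then have "norm (z $ 1) \<le> \<rho>" using \<rho> by (simp add: mult_left_le)
    then show "norm (zpow z \<beta>) \<le> \<rho> ^ (\<beta> $ 1)" for \<beta>
      by (simp add: zpow_vec1 norm_power power_mono)
  qed (use p in auto)
  also have "\<dots> = (\<Sum>\<^sub>\<infinity>k. ennreal (c k * (\<rho> ^ k) powr p))"
    by (simp add: majorant_sum_def infsum_vec1 c_def)
  also have "\<dots> \<le> (\<Sum>\<^sub>\<infinity>\<alpha>. ennreal (RF \<alpha>))"
  proof (rule infsum_le_finite_sums)
    fix F :: "nat set" assume "finite F"
    then obtain K where "F \<subseteq> {..K}" by (meson finite_nat_iff_bounded_le)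
    then have "(\<Sum>k\<in>F. ennreal (c k * (\<rho> ^ k) powr p)) \<le> (\<Sum>k\<le>K. ennreal (c k * (\<rho> ^ k) powr p))"
      by (intro sum_mono2) auto
    also have "\<dots> \<le> (\<Sum>k\<le>K. \<Sum>\<alpha> | mdeg \<alpha> = k. ennreal (RF \<alpha>))"
      using majorant_term_le_diag_block[where a = a and b = b, OF U BH p u r]
      by (intro sum_mono) (simp add: sum_ennreal RF_def c_def \<rho>_def ennreal_leI)
    also have "\<dots> = (\<Sum>\<alpha> | mdeg \<alpha> \<le> K. ennreal (RF \<alpha>))" by (rule sum_mdeg_le_by_degree[symmetric])
    also have "\<dots> \<le> (\<Sum>\<^sub>\<infinity>\<alpha>. ennreal (RF \<alpha>))" by (rule ennreal_sum_le_infsum[OF finite_mdeg_le])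
    finally show "(\<Sum>k\<in>F. ennreal (c k * (\<rho> ^ k) powr p)) \<le> (\<Sum>\<^sub>\<infinity>\<alpha>. ennreal (RF \<alpha>))" .
  qed (rule nonneg_summable_on_complete, simp)
  also have "\<dots> = majorant_sum U p (diag_coeff u a) (diag_coeff u b) (rpow r)"
    by (simp add: majorant_sum_def RF_def)
  finally show ?thesis .
qed

lemma bohr_admissible_of_arith_admissible:
  fixes J :: "'h::{real_inner,complete_space} \<Rightarrow> 'h" and U :: "('h \<Rightarrow>\<^sub>L 'h) \<Rightarrow> 'y::real_normed_vector"
    and r :: "real ^ 'n::finite"
  assumes J: "cstruct_hilbert J" and U: "cbounded_linear_on J JY U" and p: "1 \<le> p" and q: "1 \<le> q"
    and r: "\<And>i. 0 \<le> r $ i" and adm: "arith_admissible J U lam (lq_ball q :: (complex ^ 'n) set) p r"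
  shows "bohr_admissible J U lam disc1 p (real CARD('n) powr (qinv q - 1) * (\<Sum>i\<in>UNIV. r $ i powr p) powr (1/p))"
  unfolding bohr_admissible_def
proof (intro allI impI SUP_least)
  define u where "u = real CARD('n) powr (qinv q - 1)"
  fix a b z assume PH: "PH J disc1 a b" and z: "z \<in> (\<lambda>w. (u * (\<Sum>i\<in>UNIV. r $ i powr p) powr (1/p)) *\<^sub>R w) ` disc1"
  note lift = PH_diag_coeff[OF J PH q, where 'n = 'n, folded u_def]
  have "majorant_sum U p a b (\<lambda>\<alpha>. norm (zpow z \<alpha>))
      \<le> majorant_sum U p (diag_coeff u a) (diag_coeff u b) (rpow r)"
    using PH p r z by (intro majorant_sum_le_diag_coeff[OF U]) (auto simp: PH_def u_def)
  also have "\<dots> \<le> ennreal (lam powr p * supnorm J (lq_ball q :: (complex ^ 'n) set) (diag_coeff u a) (diag_coeff u b) powr p)"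
    using adm lift(1) by (simp add: arith_admissible_def)
  also have "\<dots> \<le> ennreal (lam powr p * supnorm J disc1 a b powr p)"
    using lift supnorm_nonneg[OF lift(1) zero_in_lq_ball] p
    by (intro ennreal_leI mult_left_mono powr_mono2) auto
  finally show "majorant_sum U p a b (\<lambda>\<alpha>. norm (zpow z \<alpha>)) \<le> ennreal (lam powr p * supnorm J disc1 a b powr p)" .
qed

lemma arith_radii_dominated:
  fixes J :: "'h::{real_inner,complete_space} \<Rightarrow> 'h" and U :: "('h \<Rightarrow>\<^sub>L 'h) \<Rightarrow> 'y::real_normed_vector"
  assumes J: "cstruct_hilbert J" and U: "cbounded_linear_on J JY U" and p: "1 \<le> p" and q: "1 \<le> q"
    and x: "x \<in> arith_radii J U lam (lq_ball q :: (complex ^ 'n::finite) set) p"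
  shows "\<exists>\<rho>\<in>bohr_radii J U lam disc1 p. x * real CARD('n) powr (1 / p + qinv q - 1) \<le> \<rho>"
proof -
  obtain r where x_eq: "x = (\<Sum>i\<in>UNIV. r $ i) / real CARD('n)" and r: "\<And>i. 0 \<le> r $ i"
    and adm: "arith_admissible J U lam (lq_ball q :: (complex ^ 'n) set) p r"
    using x unfolding arith_radii_def by blast
  define \<rho> where "\<rho> = real CARD('n) powr (qinv q - 1) * (\<Sum>i\<in>UNIV. r $ i powr p) powr (1/p)"
  have "\<rho> \<in> bohr_radii J U lam disc1 p"
    using bohr_admissible_of_arith_admissible[OF J U p q r adm] by (simp add: bohr_radii_def \<rho>_def)
  moreover have "x * real CARD('n) powr (1 / p + qinv q - 1) \<le> \<rho>"
    unfolding x_eq \<rho>_def by (rule mean_mult_card_powr_le[OF p r])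
  ultimately show ?thesis by blast
qed

theorem mainTheorem14:
  fixes J :: "'h::{real_inner,complete_space} \<Rightarrow> 'h"
    and JY :: "'y::banach \<Rightarrow> 'y"
    and U :: "('h \<Rightarrow>\<^sub>L 'h) \<Rightarrow> 'y"
    and lam p :: real and q :: ereal
  assumes "cstruct_hilbert J"
    and "cstruct_banach JY"
    and "cbounded_linear_on J JY U"
    and "\<exists>T\<in>BH J. U T \<noteq> 0"
    and "opnorm J U < lam"
    and "1 \<le> p"
    and "1 \<le> q"
  shows "Rlam J U lam disc1 p / real CARD('n::finite)
           \<le> APlam J U lam (lq_ball q :: (complex ^ 'n) set) p
       \<and> APlam J U lam (lq_ball q :: (complex ^ 'n) set) p
           \<le> Rlam J U lam disc1 p / real CARD('n) powr (1 / p + qinv q - 1)"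
proof -
  note J = assms(1) and U = assms(3) and lam = assms(5) and p = assms(6) and q = assms(7)
  define N where "N = real CARD('n)"
  define SR where "SR = bohr_radii J U lam disc1 p"
  define SA where "SA = arith_radii J U lam (lq_ball q :: (complex ^ 'n) set) p"
  obtain T where T: "T \<in> BH J" "U T \<noteq> 0" using assms(4) by blast
  have lam0: "0 \<le> lam" and p0: "0 < p" using lam opnorm_nonneg_bound(1)[OF J U] p by linarith+
  have "0 \<in> SR" unfolding SR_def by (rule zero_in_bohr_radii[OF J U lam p0]) (simp add: disc1_def)
  have "0 \<in> SA" unfolding SA_def by (rule zero_in_arith_radii[OF J U lam p0 zero_in_lq_ball])
  have "bdd_above SR"
    using bohr_admissible_le[OF J U T lam0 p0] by (auto simp: SR_def bohr_radii_def intro!: bdd_aboveI)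
  have dominated: "\<exists>\<rho>\<in>SR. x * N powr (1 / p + qinv q - 1) \<le> \<rho>" if "x \<in> SA" for x
    using arith_radii_dominated[OF J U p q] that by (simp add: SA_def SR_def N_def)
  have "SA \<noteq> {}" and "0 < N powr (1 / p + qinv q - 1)" using \<open>0 \<in> SA\<close> by (auto simp: N_def)
  note SA_bounds = cSup_le_cSup_divide[OF this(1) \<open>bdd_above SR\<close> this(2) dominated]
  have "Sup SR \<le> N * Sup SA"
    using \<open>0 \<in> SR\<close> \<open>0 \<in> SA\<close> SA_bounds(1) arith_radii_axis[OF less_imp_le[OF p0] q]
    by (intro cSup_le_mult_cSup) (auto simp: SA_def SR_def N_def)
  then show ?thesis
    using SA_bounds(2) unfolding Rlam_eq_Sup_bohr_radii APlam_eq_Sup_arith_radii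
    by (simp add: pos_divide_le_eq mult.commute SR_def SA_def N_def)
qed

end
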